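(* Let $W^{(1)},W^{(2)},\ldots$ be an infinite sequence of finite Coxeter groups such that $W^{(n)}$ has rank $n$, and let $s_n^2$ be the variance of the number of $W^{(n)}$-descents of a uniformly random element of $W^{(n)}$. Consider the conditions: (A1) the rank of the non-dihedral component of $W^{(n)}$ tends to infinity; (A2) the rank of the non-dihedral component of $W^{(n)}$ is not globally bounded; (B) the irreducible dihedral components $\{I_2(m_i^{(n)})\}_{i\in I(n)}$ of $W^{(n)}$ satisfy $\sum_{i\in I(n)} 1/m_i^{(n)}\to\infty$. Then $[(\mathrm{A1})\text{ or }(\mathrm{B})]\Rightarrow s_n\to\infty\Rightarrow[(\mathrm{A2})\text{ or }(\mathrm{B})]$.
   Context: The number of descents of $w$ is $\#\{\beta\in\Delta : w(\beta)\in\Phi^-\}$ for a fixed root system with simple roots $\Delta$. Each finite Coxeter group is a product of irreducible components; the irreducible dihedral components are those of type $I_2(m)$ (rank two), and the non-dihedral component of $W$ is the parabolic subgroup formed by all irreducible components of $W$ that are not of dihedral type. *)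

theory Defs
  imports "HOL-Probability.Probability"
begin

text \<open>A Coxeter matrix of rank n is encoded as M :: nat => nat => nat on the index set
{0..<n}: M i i = 1, M i j = M j i >= 2 for i ~= j (finite entries; finiteness of the
group forces all entries to be finite anyway).\<close>

definition coxeter_matrix :: "(nat \<Rightarrow> nat \<Rightarrow> nat) \<Rightarrow> nat \<Rightarrow> bool" where
  "coxeter_matrix M n \<longleftrightarrow>
     (\<forall>i<n. M i i = 1) \<and>
     (\<forall>i<n. \<forall>j<n. M i j = M j i) \<and>
     (\<forall>i<n. \<forall>j<n. i \<noteq> j \<longrightarrow> M i j \<ge> 2)"

text \<open>Geometric (Tits) representation on vectors v :: nat => real whose coordinate k
is the coefficient of the simple root alpha_k (k < n).  Bilinear form
B(alpha_i, alpha_j) = - cos(pi / m_ij).\<close>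

definition cox_form :: "(nat \<Rightarrow> nat \<Rightarrow> nat) \<Rightarrow> nat \<Rightarrow> nat \<Rightarrow> (nat \<Rightarrow> real) \<Rightarrow> real" where
  "cox_form M n i v = (\<Sum>j<n. - cos (pi / real (M i j)) * v j)"

definition simple_root :: "nat \<Rightarrow> nat \<Rightarrow> real" where
  "simple_root i = (\<lambda>k. if k = i then 1 else 0)"

definition cox_refl :: "(nat \<Rightarrow> nat \<Rightarrow> nat) \<Rightarrow> nat \<Rightarrow> nat \<Rightarrow> (nat \<Rightarrow> real) \<Rightarrow> (nat \<Rightarrow> real)" where
  "cox_refl M n i v = (\<lambda>k. v k - 2 * cox_form M n i v * simple_root i k)"

definition cox_group :: "(nat \<Rightarrow> nat \<Rightarrow> nat) \<Rightarrow> nat \<Rightarrow> ((nat \<Rightarrow> real) \<Rightarrow> (nat \<Rightarrow> real)) set" where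
  "cox_group M n = {foldr (\<circ>) (map (cox_refl M n) is) id | is. set is \<subseteq> {..<n}}"

definition cox_roots :: "(nat \<Rightarrow> nat \<Rightarrow> nat) \<Rightarrow> nat \<Rightarrow> (nat \<Rightarrow> real) set" where
  "cox_roots M n = {w (simple_root i) | w i. w \<in> cox_group M n \<and> i < n}"

definition cox_neg_roots :: "(nat \<Rightarrow> nat \<Rightarrow> nat) \<Rightarrow> nat \<Rightarrow> (nat \<Rightarrow> real) set" where
  "cox_neg_roots M n = {\<beta> \<in> cox_roots M n. \<forall>k<n. \<beta> k \<le> 0}"

definition descents :: "(nat \<Rightarrow> nat \<Rightarrow> nat) \<Rightarrow> nat \<Rightarrow> ((nat \<Rightarrow> real) \<Rightarrow> (nat \<Rightarrow> real)) \<Rightarrow> nat" where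
  "descents M n w = card {i. i < n \<and> w (simple_root i) \<in> cox_neg_roots M n}"

definition des_variance :: "(nat \<Rightarrow> nat \<Rightarrow> nat) \<Rightarrow> nat \<Rightarrow> real" where
  "des_variance M n =
     measure_pmf.variance (pmf_of_set (cox_group M n)) (\<lambda>w. real (descents M n w))"

text \<open>Irreducible components = connected components of the Coxeter graph
(vertices {0..<n}, edge i--j iff m_ij >= 3).\<close>

definition cox_edges :: "(nat \<Rightarrow> nat \<Rightarrow> nat) \<Rightarrow> nat \<Rightarrow> (nat \<times> nat) set" where
  "cox_edges M n = {(i, j). i < n \<and> j < n \<and> i \<noteq> j \<and> M i j \<ge> 3}"

definition cox_component :: "(nat \<Rightarrow> nat \<Rightarrow> nat) \<Rightarrow> nat \<Rightarrow> nat \<Rightarrow> nat set" where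
  "cox_component M n i = {j. j < n \<and> (i, j) \<in> (cox_edges M n)\<^sup>*}"

text \<open>Dihedral components: irreducible components of rank two, I_2(m) with m = m_ij,
recorded as pairs (i,j), i < j.\<close>

definition dihedral_pairs :: "(nat \<Rightarrow> nat \<Rightarrow> nat) \<Rightarrow> nat \<Rightarrow> (nat \<times> nat) set" where
  "dihedral_pairs M n = {(i, j). i < j \<and> j < n \<and> cox_component M n i = {i, j}}"

definition dihedral_sum :: "(nat \<Rightarrow> nat \<Rightarrow> nat) \<Rightarrow> nat \<Rightarrow> real" where
  "dihedral_sum M n = (\<Sum>(i, j)\<in>dihedral_pairs M n. 1 / real (M i j))"

definition nondihedral_rank :: "(nat \<Rightarrow> nat \<Rightarrow> nat) \<Rightarrow> nat \<Rightarrow> nat" where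
  "nondihedral_rank M n = card {i. i < n \<and> card (cox_component M n i) \<noteq> 2}"

end

theory Submission
  imports Defs
begin

text \<open>In the geometric representation every root is either nonnegative or nonpositive in the
basis of simple roots; the proof is Humphreys' induction on length, which reduces to the
rank-two parabolic subgroups \<open>W\<^sub>{\<^sub>i\<^sub>,\<^sub>j\<^sub>}\<close>, dihedral of order \<open>2 m\<^sub>i\<^sub>j\<close>.
Writing \<open>W = W\<^sup>{\<^sup>i\<^sup>,\<^sup>j\<^sup>} \<times> W\<^sub>{\<^sub>i\<^sub>,\<^sub>j\<^sub>}\<close> with the first factor the elements
sending \<open>\<alpha>\<^sub>i, \<alpha>\<^sub>j\<close> to positive roots, one finds that a uniform element has a descent at \<open>i\<close>
with probability \<open>1/2\<close> and descents at both \<open>i\<close> and \<open>j\<close> with probability \<open>1/(2 m\<^sub>i\<^sub>j)\<close>.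
Hence the variance of the number of descents is
\<open>\<Sum>\<^sub>i (1/4 - \<Sum>\<^sub>j\<^sub>\<noteq>\<^sub>i (1/4 - 1/(2 m\<^sub>i\<^sub>j)))\<close>.
The row of a generator in a dihedral component \<open>I\<^sub>2(m)\<close> contributes exactly \<open>1/(2m)\<close>.
For the remaining \<open>r\<close> generators, finiteness of \<open>W\<close> makes the Tits form positive definite
(it is invariant and \<open>W\<close> preserves an averaged inner product);
this forces \<open>m\<^sub>i\<^sub>j \<le> 5\<close> on edges of components of rank at least three and
\<open>\<Sum>\<^sub>i\<^sub>\<noteq>\<^sub>j cos(\<pi>/m\<^sub>i\<^sub>j) \<le> r\<close> there, so their total contribution lies between \<open>r/100\<close> and \<open>r/4\<close>.
So the variance lies between \<open>r/100 + D\<close> and \<open>r/4 + D\<close>, with \<open>D\<close> the dihedral sum.\<close>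

locale coxeter =
  fixes M :: "nat \<Rightarrow> nat \<Rightarrow> nat" and n :: nat
  assumes coxeter: "coxeter_matrix M n"
begin

definition sref :: "nat \<Rightarrow> (nat \<Rightarrow> real) \<Rightarrow> (nat \<Rightarrow> real)" where
  "sref i = cox_refl M n i"

definition form :: "nat \<Rightarrow> (nat \<Rightarrow> real) \<Rightarrow> real" where
  "form i = cox_form M n i"

definition word :: "nat list \<Rightarrow> (nat \<Rightarrow> real) \<Rightarrow> (nat \<Rightarrow> real)" where
  "word xs = foldr (\<circ>) (map sref xs) id"

definition W :: "nat set \<Rightarrow> ((nat \<Rightarrow> real) \<Rightarrow> (nat \<Rightarrow> real)) set" where
  "W J = {word xs | xs. set xs \<subseteq> J}"

definition Vn :: "(nat \<Rightarrow> real) set" where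
  "Vn = {v. \<forall>k\<ge>n. v k = 0}"

definition length_in :: "nat set \<Rightarrow> ((nat \<Rightarrow> real) \<Rightarrow> (nat \<Rightarrow> real)) \<Rightarrow> nat" where
  "length_in J w = (LEAST k. \<exists>xs. length xs = k \<and> set xs \<subseteq> J \<and> word xs = w)"

abbreviation Wn :: "((nat \<Rightarrow> real) \<Rightarrow> (nat \<Rightarrow> real)) set" where
  "Wn \<equiv> W {..<n}"

abbreviation len :: "((nat \<Rightarrow> real) \<Rightarrow> (nat \<Rightarrow> real)) \<Rightarrow> nat" where
  "len \<equiv> length_in {..<n}"

lemma M_diag: "i < n \<Longrightarrow> M i i = 1"
  using coxeter by (auto simp: coxeter_matrix_def)

lemma M_sym: "i < n \<Longrightarrow> j < n \<Longrightarrow> M i j = M j i"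
  using coxeter by (auto simp: coxeter_matrix_def)

lemma M_ge2: "i < n \<Longrightarrow> j < n \<Longrightarrow> i \<noteq> j \<Longrightarrow> 2 \<le> M i j"
  using coxeter by (auto simp: coxeter_matrix_def)

lemma cox_group_eq: "cox_group M n = Wn"
  unfolding cox_group_def W_def word_def sref_def by auto

subsection \<open>The geometric representation\<close>

lemma form_lin: "form i (\<lambda>k. a * x k + b * y k) = a * form i x + b * form i y"
  by (simp add: form_def cox_form_def sum.distrib[symmetric] sum_distrib_left algebra_simps)

lemma form_uminus: "form i (\<lambda>k. - x k) = - form i x"
  by (simp add: form_def cox_form_def sum_negf)

lemma form_simple_root: "j < n \<Longrightarrow> form i (simple_root j) = - cos (pi / real (M i j))"
  by (simp add: form_def cox_form_def simple_root_def if_distrib cong: if_cong)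

lemma form_simple_root_self: "i < n \<Longrightarrow> form i (simple_root i) = 1"
  by (simp add: form_simple_root M_diag)

lemma sref_apply: "sref i v k = v k - 2 * form i v * simple_root i k"
  by (simp add: sref_def cox_refl_def form_def)

lemma sref_lin: "sref i (\<lambda>k. a * x k + b * y k) = (\<lambda>k. a * sref i x k + b * sref i y k)"
  by (rule ext) (simp add: sref_apply form_lin algebra_simps)

lemma sref_uminus: "sref i (\<lambda>k. - x k) = (\<lambda>k. - sref i x k)"
  by (rule ext) (simp add: sref_apply form_uminus algebra_simps)

lemma sref_eq_comb: "sref i v = (\<lambda>k. 1 * v k + (- 2 * form i v) * simple_root i k)"
  by (rule ext) (simp add: sref_apply)

lemma form_sref: "i < n \<Longrightarrow> form i (sref i v) = - form i v"
  by (subst sref_eq_comb) (simp only: form_lin form_simple_root_self)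

lemma sref_sref: "i < n \<Longrightarrow> sref i (sref i v) = v"
  by (rule ext) (simp add: sref_apply[of i "sref i v"] form_sref sref_apply[of i v])

lemma sref_comp_sref: "i < n \<Longrightarrow> sref i \<circ> sref i = id"
  by (auto simp: sref_sref)

lemma sref_simple_root_self: "i < n \<Longrightarrow> sref i (simple_root i) = (\<lambda>k. - simple_root i k)"
  by (rule ext) (simp add: sref_apply form_simple_root_self)

lemma sref_simple_root: "i < n \<Longrightarrow> j < n \<Longrightarrow>
   sref i (simple_root j) = (\<lambda>k. simple_root j k + 2 * cos (pi / real (M i j)) * simple_root i k)"
  by (rule ext) (simp add: sref_apply form_simple_root)

lemma sref_fixed: "form i y = 0 \<Longrightarrow> sref i y = y"
  by (rule ext) (simp add: sref_apply)

lemma sref_Vn: "v \<in> Vn \<Longrightarrow> i < n \<Longrightarrow> sref i v \<in> Vn"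
  by (auto simp: Vn_def sref_apply simple_root_def)

lemma simple_root_Vn: "i < n \<Longrightarrow> simple_root i \<in> Vn"
  by (auto simp: Vn_def simple_root_def)

lemma simple_root_nonzero: "simple_root i \<noteq> (\<lambda>k. 0)"
  by (metis simple_root_def zero_neq_one)

lemma sref_neq_id: "j < n \<Longrightarrow> sref j \<noteq> id"
  by (metis id_apply simple_root_nonzero sref_simple_root_self neg_equal_zero)

subsection \<open>Words and parabolic subgroups\<close>

lemma word_Nil [simp]: "word [] = id"
  by (simp add: word_def)

lemma word_Cons [simp]: "word (x # xs) = sref x \<circ> word xs"
  by (simp add: word_def)

lemma word_append: "word (xs @ ys) = word xs \<circ> word ys"
  by (induction xs) auto

lemma word_snoc: "word (xs @ [y]) = word xs \<circ> sref y"
  by (simp add: word_append)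

lemma word_lin: "word xs (\<lambda>k. a * x k + b * y k) = (\<lambda>k. a * word xs x k + b * word xs y k)"
  by (induction xs arbitrary: x y) (auto simp: sref_lin)

lemma word_uminus: "word xs (\<lambda>k. - x k) = (\<lambda>k. - word xs x k)"
  by (induction xs arbitrary: x) (auto simp: sref_uminus)

lemma word_Vn: "set xs \<subseteq> {..<n} \<Longrightarrow> v \<in> Vn \<Longrightarrow> word xs v \<in> Vn"
  by (induction xs arbitrary: v) (auto simp: sref_Vn)

lemma word_rev_comp: "set xs \<subseteq> {..<n} \<Longrightarrow> word (rev xs) \<circ> word xs = id"
proof (induction xs)
  case (Cons x xs)
  have "word (rev (x # xs)) \<circ> word (x # xs) = word (rev xs) \<circ> (sref x \<circ> sref x) \<circ> word xs"
    by (simp add: word_snoc comp_assoc)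
  also have "sref x \<circ> sref x = id"
    using Cons.prems by (simp add: sref_comp_sref)
  finally show ?case
    using Cons by simp
qed simp

lemma word_comp_rev: "set xs \<subseteq> {..<n} \<Longrightarrow> word xs \<circ> word (rev xs) = id"
  using word_rev_comp[of "rev xs"] by simp

lemma word_fixed: "set ws \<subseteq> {p, q} \<Longrightarrow> form p y = 0 \<Longrightarrow> form q y = 0 \<Longrightarrow> word ws y = y"
  by (induction ws) (auto simp: sref_fixed)

lemma W_id: "id \<in> W J"
  unfolding W_def by (intro CollectI exI[of _ "[]"]) simp

lemma W_comp: "x \<in> W J \<Longrightarrow> y \<in> W J \<Longrightarrow> x \<circ> y \<in> W J"
  unfolding W_def by (auto, metis Un_subset_iff word_append set_append)

lemma W_sref: "i \<in> J \<Longrightarrow> sref i \<in> W J"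
  unfolding W_def by (intro CollectI exI[of _ "[i]"]) simp

lemma W_word: "set xs \<subseteq> J \<Longrightarrow> word xs \<in> W J"
  unfolding W_def by blast

lemma W_mono: "J \<subseteq> K \<Longrightarrow> W J \<subseteq> W K"
  unfolding W_def by auto

lemma W_inverse:
  assumes "J \<subseteq> {..<n}" "w \<in> W J"
  obtains w' where "w' \<in> W J" "w' \<circ> w = id" "w \<circ> w' = id"
proof -
  obtain xs where xs: "set xs \<subseteq> J" "w = word xs"
    using assms(2) unfolding W_def by auto
  show ?thesis
  proof (rule that)
    show "word (rev xs) \<in> W J"
      using xs by (intro W_word) auto
  qed (use xs assms(1) word_rev_comp[of xs] word_comp_rev[of xs] in auto)
qed

lemma W_lin: "w \<in> W J \<Longrightarrow> w (\<lambda>k. a * x k + b * y k) = (\<lambda>k. a * w x k + b * w y k)"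
  unfolding W_def using word_lin by auto

lemma W_uminus: "w \<in> W J \<Longrightarrow> w (\<lambda>k. - x k) = (\<lambda>k. - w x k)"
  unfolding W_def using word_uminus by auto

lemma W_zero: "w \<in> W J \<Longrightarrow> w (\<lambda>k. 0) = (\<lambda>k. 0)"
  using W_lin[of w J 0 "\<lambda>k. 0" 0 "\<lambda>k. 0"] by simp

lemma W_Vn: "w \<in> Wn \<Longrightarrow> v \<in> Vn \<Longrightarrow> w v \<in> Vn"
  unfolding W_def using word_Vn by auto

lemma W_inj: "J \<subseteq> {..<n} \<Longrightarrow> w \<in> W J \<Longrightarrow> w x = w y \<Longrightarrow> x = y"
  by (metis W_inverse comp_apply id_apply)

lemma W_simple_root_nonzero: "w \<in> Wn \<Longrightarrow> w (simple_root i) \<noteq> (\<lambda>k. 0)"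
  using W_inj[of "{..<n}" w "simple_root i" "\<lambda>k. 0"] W_zero[of w] simple_root_nonzero by auto

lemma W_sum:
  assumes "w \<in> W J" "finite S"
  shows "w (\<lambda>k. \<Sum>i\<in>S. c i * x i k) = (\<lambda>k. \<Sum>i\<in>S. c i * w (x i) k)"
  using assms(2)
proof (induction S rule: finite_induct)
  case (insert a S)
  then show ?case
    using W_lin[OF assms(1), of "c a" "x a" 1 "\<lambda>k. \<Sum>i\<in>S. c i * x i k"] by simp
qed (simp add: W_zero[OF assms(1)])

lemma comp_sref_cancel: "i < n \<Longrightarrow> (w \<circ> sref i) \<circ> sref i = w"
  by (simp add: comp_assoc sref_comp_sref)

lemma length_in_word_exists:
  assumes "w \<in> W J"
  obtains xs where "length xs = length_in J w" "set xs \<subseteq> J" "word xs = w"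
proof -
  from assms have "\<exists>k xs. length xs = k \<and> set xs \<subseteq> J \<and> word xs = w"
    unfolding W_def by auto
  from LeastI_ex[OF this] show ?thesis
    using that unfolding length_in_def by auto
qed

lemma length_in_le: "set xs \<subseteq> J \<Longrightarrow> length_in J (word xs) \<le> length xs"
  unfolding length_in_def by (auto intro: Least_le)

lemma length_in_mono: "J \<subseteq> K \<Longrightarrow> w \<in> W J \<Longrightarrow> length_in K w \<le> length_in J w"
  by (metis length_in_word_exists length_in_le order.trans)

lemma length_in_comp: "x \<in> W J \<Longrightarrow> y \<in> W J \<Longrightarrow> length_in J (x \<circ> y) \<le> length_in J x + length_in J y"
  by (metis length_in_word_exists length_in_le length_append set_append Un_subset_iff word_append)

lemma length_in_sref: "i \<in> J \<Longrightarrow> length_in J (sref i) \<le> 1"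
  using length_in_le[of "[i]" J] by simp

lemma length_in_eq_0: "w \<in> W J \<Longrightarrow> length_in J w = 0 \<Longrightarrow> w = id"
  by (metis length_0_conv length_in_word_exists word_Nil)

lemma length_in_sref_eq: "j \<in> J \<Longrightarrow> j < n \<Longrightarrow> length_in J (sref j) = 1"
  using length_in_eq_0[OF W_sref] length_in_sref sref_neq_id by (metis le_neq_implies_less less_one)

end

subsection \<open>Rank-two parabolic subgroups\<close>

lemma pi_div_le_pi: "1 \<le> k \<Longrightarrow> pi / real k \<le> pi"
  by (simp add: field_simps)

lemma cos_pi_div_mono:
  assumes "2 \<le> k" "k \<le> m"
  shows "cos (pi / real k) \<le> cos (pi / real m)"
proof (rule cos_monotone_0_pi_le)
  show "pi / real m \<le> pi / real k"
    using assms by (intro divide_left_mono) auto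
qed (use assms pi_div_le_pi[of k] in auto)

lemma cos_pi_div_nonneg: "2 \<le> m \<Longrightarrow> 0 \<le> cos (pi / real m)"
  using cos_pi_div_mono[of 2 m] by simp

lemma cos_pi_div_less_1: "2 \<le> m \<Longrightarrow> cos (pi / real m) < 1"
  using cos_monotone_0_pi[of 0 "pi / real m"] pi_div_le_pi[of m] by simp

fun alt_word :: "nat \<Rightarrow> nat \<Rightarrow> nat \<Rightarrow> nat list" where
  "alt_word p q 0 = []"
| "alt_word p q (Suc k) = (if even k then q else p) # alt_word p q k"

lemma length_alt_word [simp]: "length (alt_word p q k) = k"
  by (induction k) auto

lemma set_alt_word: "set (alt_word p q k) \<subseteq> {p, q}"
  by (induction k) auto

lemma alt_word_Suc_snoc: "alt_word q p (Suc k) = alt_word p q k @ [p]"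
  by (induction k) auto

lemma alt_word_add:
  "alt_word p q (d + k) =
     alt_word (if even k then p else q) (if even k then q else p) d @ alt_word p q k"
  by (induction d) auto

definition sin_ratio :: "nat \<Rightarrow> nat \<Rightarrow> real" where
  "sin_ratio m k = sin (real k * pi / real m) / sin (pi / real m)"

lemma sin_ratio_rec: "sin_ratio m (k + 2) = 2 * cos (pi / real m) * sin_ratio m (k + 1) - sin_ratio m k"
proof -
  let ?x = "pi / real m"
  have a: "real (k + 2) * pi / real m = real (k + 1) * ?x + ?x"
    by (cases "m = 0") (simp_all add: field_simps)
  have b: "real k * pi / real m = real (k + 1) * ?x - ?x"
    by (cases "m = 0") (simp_all add: field_simps)
  have "sin (real (k + 2) * pi / real m) + sin (real k * pi / real m)
        = 2 * cos ?x * sin (real (k + 1) * ?x)"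
    unfolding a b sin_add sin_diff by (simp add: algebra_simps)
  then have "sin_ratio m (k + 2) + sin_ratio m k = 2 * cos ?x * sin_ratio m (k + 1)"
    unfolding sin_ratio_def by (simp add: add_divide_distrib[symmetric])
  then show ?thesis
    by linarith
qed

lemma sin_pi_div_pos: "2 \<le> m \<Longrightarrow> sin (pi / real m) > 0"
  by (rule sin_gt_zero) (auto simp: field_simps)

lemma sin_ratio_0 [simp]: "sin_ratio m 0 = 0"
  by (simp add: sin_ratio_def)

lemma sin_ratio_1: "2 \<le> m \<Longrightarrow> sin_ratio m (Suc 0) = 1"
  using sin_pi_div_pos[of m] by (simp add: sin_ratio_def)

lemma sin_ratio_pos: "0 < k \<Longrightarrow> k < m \<Longrightarrow> sin_ratio m k > 0"
  unfolding sin_ratio_def by (intro divide_pos_pos sin_gt_zero) (auto simp: field_simps)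

lemma sin_ratio_self: "sin_ratio m m = 0"
  by (simp add: sin_ratio_def)

lemma sin_ratio_nonneg: "k \<le> m \<Longrightarrow> 2 \<le> m \<Longrightarrow> sin_ratio m k \<ge> 0"
  using sin_ratio_pos[of k m] sin_ratio_self[of m] by (cases "k = 0"; cases "k = m") auto

lemma sin_ratio_Suc_self: "2 \<le> m \<Longrightarrow> sin_ratio m (m + 1) = -1"
proof -
  assume m: "2 \<le> m"
  have "real (m + 1) * pi / real m = pi / real m + pi"
    using m by (simp add: field_simps)
  then show ?thesis
    using sin_pi_div_pos[OF m] by (simp add: sin_ratio_def sin_add)
qed

lemma sin_ratio_pred_self: "2 \<le> m \<Longrightarrow> sin_ratio m (m - 1) = 1"
proof -
  assume m: "2 \<le> m"
  have "real (m - 1) * pi / real m = pi - pi / real m"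
    using m by (simp add: field_simps of_nat_diff)
  then show ?thesis
    using sin_pi_div_pos[OF m] by (simp add: sin_ratio_def sin_diff)
qed

context coxeter
begin

definition dihedral_pos :: "nat \<Rightarrow> nat \<Rightarrow> (nat \<Rightarrow> real) \<Rightarrow> bool" where
  "dihedral_pos p q x \<longleftrightarrow> (\<exists>a b. a \<ge> 0 \<and> b \<ge> 0 \<and> (a > 0 \<or> b > 0) \<and>
      x = (\<lambda>t. a * simple_root p t + b * simple_root q t))"

definition dihedral_neg :: "nat \<Rightarrow> nat \<Rightarrow> (nat \<Rightarrow> real) \<Rightarrow> bool" where
  "dihedral_neg p q x \<longleftrightarrow> dihedral_pos p q (\<lambda>t. - x t)"

lemma dihedral_pos_commute_imp:
  assumes "dihedral_pos p q x"
  shows "dihedral_pos q p x"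
proof -
  obtain a b where "a \<ge> 0 \<and> b \<ge> 0 \<and> (a > 0 \<or> b > 0) \<and>
      x = (\<lambda>t. a * simple_root p t + b * simple_root q t)"
    using assms unfolding dihedral_pos_def by blast
  then show ?thesis
    unfolding dihedral_pos_def by (intro exI[of _ b] exI[of _ a]) (auto simp: add.commute)
qed

lemma dihedral_pos_commute: "dihedral_pos p q x \<longleftrightarrow> dihedral_pos q p x"
  using dihedral_pos_commute_imp by blast

lemma dihedral_neg_commute: "dihedral_neg p q x \<longleftrightarrow> dihedral_neg q p x"
  unfolding dihedral_neg_def using dihedral_pos_commute by blast

lemma dihedral_pos_simple_root: "dihedral_pos p q (simple_root p)"
  unfolding dihedral_pos_def by (intro exI[of _ 1] exI[of _ 0]) auto

lemma dihedral_pos_coords: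
  assumes "p \<noteq> q" "dihedral_pos p q x"
  shows "x p \<ge> 0 \<and> x q \<ge> 0 \<and> (x p > 0 \<or> x q > 0)"
proof -
  obtain a b where "a \<ge> 0" "b \<ge> 0" "a > 0 \<or> b > 0"
      "x = (\<lambda>t. a * simple_root p t + b * simple_root q t)"
    using assms(2) unfolding dihedral_pos_def by blast
  moreover from this have "x p = a" "x q = b"
    using assms(1) by (simp_all add: simple_root_def)
  ultimately show ?thesis
    by simp
qed

lemma dihedral_pos_nonzero: "p \<noteq> q \<Longrightarrow> dihedral_pos p q x \<Longrightarrow> x \<noteq> (\<lambda>k. 0)"
  by (metis dihedral_pos_coords less_irrefl)

lemma not_dihedral_pos_neg: "p \<noteq> q \<Longrightarrow> dihedral_pos p q x \<Longrightarrow> dihedral_neg p q x \<Longrightarrow> False"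
  unfolding dihedral_neg_def using dihedral_pos_coords[of p q x] dihedral_pos_coords[of p q "\<lambda>t. - x t"]
  by auto


lemma alt_word_simple_root:
  assumes pq: "p < n" "q < n" "p \<noteq> q"
  shows "word (alt_word p q k) (simple_root p) =
    (\<lambda>t. sin_ratio (M p q) (k + 1) * simple_root (if even k then p else q) t
        + sin_ratio (M p q) k * simple_root (if even k then q else p) t)"
proof (induction k)
  case 0
  then show ?case
    using M_ge2[OF pq] by (simp add: sin_ratio_1)
next
  case (Suc k)
  have mqp: "M q p = M p q"
    using M_sym pq by auto
  have rec: "sin_ratio (M p q) (Suc (Suc k))
      = 2 * cos (pi / real (M p q)) * sin_ratio (M p q) (Suc k) - sin_ratio (M p q) k"
    using sin_ratio_rec[of "M p q" k] by simp
  show ?case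
  proof (cases "even k")
    case True
    have "word (alt_word p q (Suc k)) (simple_root p)
        = (\<lambda>t. sin_ratio (M p q) (k + 1) * sref q (simple_root p) t
              + sin_ratio (M p q) k * sref q (simple_root q) t)"
      using True by (simp add: Suc sref_lin)
    also have "\<dots> = (\<lambda>t. sin_ratio (M p q) (Suc k + 1) * simple_root q t
                     + sin_ratio (M p q) (Suc k) * simple_root p t)"
      by (rule ext) (simp add: sref_simple_root_self sref_simple_root pq mqp rec algebra_simps)
    finally show ?thesis
      using True by simp
  next
    case False
    have "word (alt_word p q (Suc k)) (simple_root p)
        = (\<lambda>t. sin_ratio (M p q) (k + 1) * sref p (simple_root q) t
              + sin_ratio (M p q) k * sref p (simple_root p) t)"
      using False by (simp add: Suc sref_lin)
    also have "\<dots> = (\<lambda>t. sin_ratio (M p q) (Suc k + 1) * simple_root p t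
                     + sin_ratio (M p q) (Suc k) * simple_root q t)"
      by (rule ext) (simp add: sref_simple_root_self sref_simple_root pq mqp rec algebra_simps)
    finally show ?thesis
      using False by simp
  qed
qed


lemma alt_word_simple_root_pos:
  assumes pq: "p < n" "q < n" "p \<noteq> q" and k: "k < M p q"
  shows "dihedral_pos p q (word (alt_word p q k) (simple_root p))"
proof -
  let ?a = "sin_ratio (M p q) (k + 1)" and ?b = "sin_ratio (M p q) k"
  have m: "2 \<le> M p q"
    using M_ge2 pq by auto
  have nonneg: "?a \<ge> 0" "?b \<ge> 0"
    using k m by (auto intro: sin_ratio_nonneg)
  have pos: "?a > 0 \<or> ?b > 0"
    using sin_ratio_pos[of k "M p q"] k sin_ratio_1[OF m] by (cases "k = 0") auto
  show ?thesis
  proof (cases "even k")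
    case True
    then show ?thesis
      unfolding alt_word_simple_root[OF pq] dihedral_pos_def
      using nonneg pos by (intro exI[of _ ?a] exI[of _ ?b]) auto
  next
    case False
    then show ?thesis
      unfolding alt_word_simple_root[OF pq] dihedral_pos_def
      using nonneg pos by (intro exI[of _ ?b] exI[of _ ?a]) (auto simp: add.commute)
  qed
qed

lemma alt_word_snoc_simple_root:
  assumes "p < n" "1 \<le> d"
  shows "word (alt_word q p d) (simple_root p) = (\<lambda>t. - word (alt_word p q (d - 1)) (simple_root p) t)"
proof -
  have "alt_word q p d = alt_word p q (d - 1) @ [p]"
    using alt_word_Suc_snoc[of q p "d - 1"] assms by simp
  then show ?thesis
    using assms by (simp add: word_snoc sref_simple_root_self word_uminus)
qed

lemma alt_word_simple_root_neg:
  assumes pq: "p < n" "q < n" "p \<noteq> q" and d: "1 \<le> d" "d \<le> M p q"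
  shows "dihedral_neg p q (word (alt_word q p d) (simple_root p))"
  unfolding dihedral_neg_def alt_word_snoc_simple_root[OF pq(1) d(1)]
  using alt_word_simple_root_pos[OF pq, of "d - 1"] d by simp

lemma braid_relation_simple_root:
  assumes pq: "p < n" "q < n" "p \<noteq> q"
  shows "word (alt_word p q (M p q)) (simple_root p) = word (alt_word q p (M p q)) (simple_root p)"
proof -
  let ?m = "M p q"
  have m: "2 \<le> ?m"
    using M_ge2 pq by auto
  have "word (alt_word q p ?m) (simple_root p)
        = (\<lambda>t. - simple_root (if even (?m - 1) then q else p) t)"
    unfolding alt_word_snoc_simple_root[OF pq(1) order.trans[OF one_le_numeral m]]
      alt_word_simple_root[OF pq]
    using m sin_ratio_pred_self[OF m] by (simp add: sin_ratio_self)
  also have "\<dots> = (\<lambda>t. - simple_root (if even ?m then p else q) t)"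
    using m by (cases "even ?m") (auto simp: even_diff_nat)
  also have "\<dots> = word (alt_word p q ?m) (simple_root p)"
    unfolding alt_word_simple_root[OF pq] using m sin_ratio_Suc_self[OF m] by (simp add: sin_ratio_self)
  finally show ?thesis
    by simp
qed

text \<open>The Gram matrix of \<open>\<alpha>\<^sub>p, \<alpha>\<^sub>q\<close> has determinant \<open>1 - cos\<^sup>2(\<pi>/m\<^sub>p\<^sub>q) > 0\<close>.\<close>

lemma decompose_orthogonal_pair:
  assumes pq: "p < n" "q < n" "p \<noteq> q"
  obtains t u y where "x = (\<lambda>k. y k + (t * simple_root p k + u * simple_root q k))"
    "form p y = 0" "form q y = 0"
proof -
  let ?c = "cos (pi / real (M p q))"
  have m: "2 \<le> M p q" and mqp: "M q p = M p q"
    using M_ge2 M_sym pq by auto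
  have c: "0 \<le> ?c" "?c < 1"
    using cos_pi_div_nonneg[OF m] cos_pi_div_less_1[OF m] by auto
  define D where "D = 1 - ?c * ?c"
  have "?c * ?c \<le> ?c"
    using c by (intro mult_left_le) auto
  then have D: "D > 0"
    unfolding D_def using c by linarith
  define t where "t = (form p x + ?c * form q x) / D"
  define u where "u = (form q x + ?c * form p x) / D"
  define z where "z = (\<lambda>k. t * simple_root p k + u * simple_root q k)"
  have "form p z = ((form p x + ?c * form q x) - ?c * (form q x + ?c * form p x)) / D"
    unfolding z_def form_lin t_def u_def using pq
    by (simp add: form_simple_root_self form_simple_root diff_divide_distrib)
  also have "\<dots> = (form p x * D) / D"
    by (simp add: D_def algebra_simps)
  finally have zp: "form p z = form p x"
    using D by simp
  have "form q z = ((form q x + ?c * form p x) - ?c * (form p x + ?c * form q x)) / D"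
    unfolding z_def form_lin t_def u_def using pq mqp
    by (simp add: form_simple_root_self form_simple_root diff_divide_distrib)
  also have "\<dots> = (form q x * D) / D"
    by (simp add: D_def algebra_simps)
  finally have zq: "form q z = form q x"
    using D by simp
  show ?thesis
  proof (rule that[of "\<lambda>k. x k - z k" t u])
    show "form p (\<lambda>k. x k - z k) = 0" "form q (\<lambda>k. x k - z k) = 0"
      using zp zq form_lin[of p 1 x "-1" z] form_lin[of q 1 x "-1" z] by simp_all
  qed (simp add: z_def)
qed

text \<open>Both sides agree on \<open>\<alpha>\<^sub>p, \<alpha>\<^sub>q\<close> and fix the vectors \<open>B\<close>-orthogonal to both.\<close>

lemma braid_relation:
  assumes pq: "p < n" "q < n" "p \<noteq> q"
  shows "word (alt_word p q (M p q)) = word (alt_word q p (M p q))"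
proof
  fix x :: "nat \<Rightarrow> real"
  let ?m = "M p q"
  obtain t u y where x: "x = (\<lambda>k. y k + (t * simple_root p k + u * simple_root q k))"
    and y: "form p y = 0" "form q y = 0"
    using decompose_orthogonal_pair[OF pq] .
  have on_x: "word (alt_word a b ?m) x
      = (\<lambda>k. y k + (t * word (alt_word a b ?m) (simple_root p) k
                   + u * word (alt_word a b ?m) (simple_root q) k))"
    if "{a, b} = {p, q}" for a b
  proof -
    have "set (alt_word a b ?m) \<subseteq> {p, q}"
      using set_alt_word[of a b ?m] that by auto
    moreover have x1: "x = (\<lambda>k. 1 * y k + 1 * (t * simple_root p k + u * simple_root q k))"
      using x by simp
    ultimately show ?thesis
      by (subst x1, simp only: word_lin word_fixed y) simp
  qed
  have "word (alt_word p q ?m) (simple_root q) = word (alt_word q p ?m) (simple_root q)"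
    using braid_relation_simple_root[of q p] pq M_sym by simp
  then show "word (alt_word p q ?m) x = word (alt_word q p ?m) x"
    using on_x[of p q] on_x[of q p] braid_relation_simple_root[OF pq] by (simp add: insert_commute)
qed

end

context coxeter
begin

lemma W_alt_word: "{a, b} \<subseteq> J \<Longrightarrow> word (alt_word a b k) \<in> W J"
  using W_word set_alt_word by (metis order.trans)

lemma sref_cancel_left: "r < n \<Longrightarrow> sref r \<circ> (sref r \<circ> f) = f"
  by (rule ext) (simp add: sref_sref)

text \<open>Cancellation of \<open>s s\<close> and the braid relation reduce every word in \<open>p, q\<close> to an
alternating one of length at most \<open>m\<^sub>p\<^sub>q\<close>.\<close>

lemma sref_comp_alt_word:
  assumes ab: "a < n" "b < n" "a \<noteq> b" and k: "k \<le> M a b" and r: "r \<in> {a, b}"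
  shows "\<exists>k' a' b'. k' \<le> M a b \<and> k' \<le> Suc k \<and> {a', b'} = {a, b} \<and>
           sref r \<circ> word (alt_word a b k) = word (alt_word a' b' k')"
proof -
  have rn: "r < n"
    using r ab by auto
  have m: "2 \<le> M a b" and mba: "M b a = M a b"
    using M_ge2 M_sym ab by auto
  have "(r = (if even k then b else a) \<and> Suc k \<le> M a b) \<or> (r = (if even k then b else a) \<and> k = M a b)
      \<or> (\<exists>j. k = Suc j \<and> r = (if even j then b else a)) \<or> (k = 0 \<and> r = a)"
  proof (cases "r = (if even k then b else a)")
    case True
    then show ?thesis
      using k by auto
  next
    case False
    then have "r = (if even k then a else b)"
      using r by auto
    then show ?thesis
      by (cases k) auto
  qed
  then consider (extend) "r = (if even k then b else a)" "Suc k \<le> M a b"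
    | (braid) "r = (if even k then b else a)" "k = M a b"
    | (cancel) j where "k = Suc j" "r = (if even j then b else a)"
    | (start) "k = 0" "r = a"
    by blast
  then show ?thesis
  proof cases
    case extend
    show ?thesis
      by (rule exI[of _ "Suc k"], rule exI[of _ a], rule exI[of _ b]) (use extend in simp)
  next
    case braid
    obtain j where j: "k = Suc j"
      using braid(2) m not0_implies_Suc by fastforce
    then have alt: "alt_word b a k = r # alt_word b a (k - 1)"
      using braid(1) by simp
    have "sref r \<circ> word (alt_word a b k) = sref r \<circ> word (alt_word b a k)"
      using braid_relation[OF ab] braid(2) by simp
    also have "\<dots> = sref r \<circ> (sref r \<circ> word (alt_word b a (k - 1)))"
      unfolding alt by simp
    also have "\<dots> = word (alt_word b a (k - 1))"
      by (rule sref_cancel_left[OF rn])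
    finally have eq: "sref r \<circ> word (alt_word a b k) = word (alt_word b a (k - 1))" .
    show ?thesis
      by (rule exI[of _ "k - 1"], rule exI[of _ b], rule exI[of _ a]) (use eq braid in auto)
  next
    case (cancel j)
    show ?thesis
      by (rule exI[of _ j], rule exI[of _ a], rule exI[of _ b]) (use cancel sref_cancel_left[OF rn] k in auto)
  next
    case start
    show ?thesis
      by (rule exI[of _ 1], rule exI[of _ b], rule exI[of _ a]) (use start m in auto)
  qed
qed

lemma dihedral_word_reduce:
  assumes pq: "p < n" "q < n" "p \<noteq> q" and ws: "set ws \<subseteq> {p, q}"
  shows "\<exists>k a b. k \<le> M p q \<and> k \<le> length ws \<and> {a, b} = {p, q} \<and> word ws = word (alt_word a b k)"
  using ws
proof (induction ws)
  case Nil
  show ?case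
    by (rule exI[of _ 0], rule exI[of _ p], rule exI[of _ q]) simp
next
  case (Cons r ws)
  then obtain k a b where kab: "k \<le> M p q" "k \<le> length ws" "{a, b} = {p, q}"
      "word ws = word (alt_word a b k)"
    by auto
  have ab: "a < n" "b < n" "a \<noteq> b" "M a b = M p q"
    using kab(3) pq M_sym by (auto simp: doubleton_eq_iff)
  obtain k' a' b' where "k' \<le> M a b" "k' \<le> Suc k" "{a', b'} = {a, b}"
      "sref r \<circ> word (alt_word a b k) = word (alt_word a' b' k')"
    using sref_comp_alt_word[OF ab(1-3), of k r] kab Cons.prems ab(4) by auto
  note k' = this
  show ?case
    by (rule exI[of _ k'], rule exI[of _ a'], rule exI[of _ b']) (use k' kab ab(4) in auto)
qed

lemma dihedral_normal_form:
  assumes pq: "p < n" "q < n" "p \<noteq> q" and u: "u \<in> W {p, q}"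
  obtains (pq_word) k where "k \<le> length_in {p, q} u" "k < M p q" "u = word (alt_word p q k)"
    | (qp_word) k where "k \<le> length_in {p, q} u" "1 \<le> k" "k \<le> M p q" "u = word (alt_word q p k)"
proof -
  obtain ws where ws: "length ws = length_in {p, q} u" "set ws \<subseteq> {p, q}" "word ws = u"
    using length_in_word_exists[OF u] by auto
  obtain k a b where kab: "k \<le> M p q" "k \<le> length ws" "{a, b} = {p, q}"
      "word ws = word (alt_word a b k)"
    using dihedral_word_reduce[OF pq ws(2)] by auto
  have "(a, b) = (p, q) \<or> (a, b) = (q, p)"
    using kab(3) by (simp add: doubleton_eq_iff)
  then consider "(a, b) = (p, q)" "k < M p q" | "(a, b) = (p, q)" "k = M p q" | "(a, b) = (q, p)" "k = 0"
    | "(a, b) = (q, p)" "k \<noteq> 0"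
    using kab(1) by force
  then show ?thesis
  proof cases
    case 2
    then show ?thesis
      using qp_word[of k] braid_relation[OF pq] kab ws M_ge2[OF pq] by auto
  qed (use pq_word[of k] qp_word[of k] pq_word[of 0] kab ws M_ge2[OF pq] in auto)
qed

lemma alt_word_neq:
  assumes pq: "p < n" "q < n" "p \<noteq> q" and kl: "k < l" "l - k \<le> M p q"
  shows "word (alt_word p q k) \<noteq> word (alt_word p q l)"
proof
  assume eq: "word (alt_word p q k) = word (alt_word p q l)"
  define d where "d = l - k"
  define a where "a = (if even k then p else q)"
  define b where "b = (if even k then q else p)"
  have ab: "a < n" "b < n" "a \<noteq> b" "M b a = M p q"
    using pq M_sym unfolding a_def b_def by auto
  have "alt_word p q l = alt_word a b d @ alt_word p q k"
    using alt_word_add[of p q d k] kl unfolding a_def b_def d_def by simp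
  then have fix_k: "word (alt_word a b d) \<circ> word (alt_word p q k) = word (alt_word p q k)"
    using eq by (simp add: word_append)
  obtain v where v: "word (alt_word p q k) \<circ> v = id"
    using W_inverse[of "{..<n}" "word (alt_word p q k)"] W_alt_word[of p q "{..<n}"] pq by auto
  have "word (alt_word a b d) (simple_root b) = simple_root b"
    using fun_cong[OF fix_k, of "v (simple_root b)"] fun_cong[OF v, of "simple_root b"] by simp
  moreover have "dihedral_neg b a (word (alt_word a b d) (simple_root b))"
    using alt_word_simple_root_neg[of b a d] ab kl unfolding d_def by auto
  ultimately show False
    using not_dihedral_pos_neg[of b a] dihedral_pos_simple_root[of b a] ab by auto
qed

lemma inj_on_alt_word:
  assumes pq: "p < n" "q < n" "p \<noteq> q" and K: "\<And>k l. k \<in> K \<Longrightarrow> l \<in> K \<Longrightarrow> l - k \<le> M p q"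
  shows "inj_on (\<lambda>k. word (alt_word p q k)) K"
proof (rule inj_onI)
  fix k l
  assume "k \<in> K" "l \<in> K" "word (alt_word p q k) = word (alt_word p q l)"
  then show "k = l"
    using alt_word_neq[OF pq, of k l] alt_word_neq[OF pq, of l k] K by (metis nat_neq_iff)
qed

lemma dihedral_group_eq:
  assumes pq: "p < n" "q < n" "p \<noteq> q"
  shows "W {p, q} = (\<lambda>k. word (alt_word p q k)) ` {..<M p q} \<union> (\<lambda>k. word (alt_word q p k)) ` {1..M p q}"
proof
  show "W {p, q} \<subseteq> (\<lambda>k. word (alt_word p q k)) ` {..<M p q} \<union> (\<lambda>k. word (alt_word q p k)) ` {1..M p q}"
    by (auto elim: dihedral_normal_form[OF pq])
qed (use W_alt_word[of p q "{p, q}"] W_alt_word[of q p "{p, q}"] in auto)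

lemma card_dihedral_group:
  assumes pq: "p < n" "q < n" "p \<noteq> q"
  shows "card (W {p, q}) = 2 * M p q"
proof -
  let ?m = "M p q"
  have qp: "q < n" "p < n" "q \<noteq> p" "M q p = ?m"
    using pq M_sym by auto
  have inj1: "inj_on (\<lambda>k. word (alt_word p q k)) {..<?m}"
    by (rule inj_on_alt_word[OF pq]) auto
  have inj2: "inj_on (\<lambda>k. word (alt_word q p k)) {1..?m}"
    by (rule inj_on_alt_word[OF qp(1-3)]) (auto simp: qp(4))
  have disj: "(\<lambda>k. word (alt_word p q k)) ` {..<?m} \<inter> (\<lambda>k. word (alt_word q p k)) ` {1..?m} = {}"
    using alt_word_simple_root_pos[OF pq] alt_word_simple_root_neg[OF pq] not_dihedral_pos_neg[OF pq(3)]
    by fastforce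
  have "card (W {p, q})
      = card ((\<lambda>k. word (alt_word p q k)) ` {..<?m}) + card ((\<lambda>k. word (alt_word q p k)) ` {1..?m})"
    unfolding dihedral_group_eq[OF pq] by (rule card_Un_disjoint) (use disj in auto)
  also have "\<dots> = ?m + ?m"
    using card_image[OF inj1] card_image[OF inj2] by simp
  finally show ?thesis
    by simp
qed

lemma dihedral_no_descent_pos:
  assumes pq: "p < n" "q < n" "p \<noteq> q" and u: "u \<in> W {p, q}"
    and no_descent: "length_in {p, q} u \<le> length_in {p, q} (u \<circ> sref p)"
  shows "dihedral_pos p q (u (simple_root p))"
  using pq u
proof (cases rule: dihedral_normal_form)
  case (pq_word k)
  then show ?thesis
    using alt_word_simple_root_pos[OF pq] by simp
next
  case (qp_word k)
  have "alt_word q p k = alt_word p q (k - 1) @ [p]"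
    using alt_word_Suc_snoc[of q p "k - 1"] qp_word by simp
  then have "u \<circ> sref p = word (alt_word p q (k - 1)) \<circ> (sref p \<circ> sref p)"
    using qp_word by (simp add: word_snoc comp_assoc)
  then have "u \<circ> sref p = word (alt_word p q (k - 1))"
    using pq by (simp add: sref_comp_sref)
  then have "length_in {p, q} (u \<circ> sref p) \<le> k - 1"
    using length_in_le[OF set_alt_word[of p q "k - 1"]] by simp
  then show ?thesis
    using no_descent qp_word by linarith
qed

lemma dihedral_root_sign:
  assumes pq: "p < n" "q < n" "p \<noteq> q" and u: "u \<in> W {p, q}"
  shows "dihedral_pos p q (u (simple_root p)) \<or> dihedral_neg p q (u (simple_root p))"
  using pq u
  by (cases rule: dihedral_normal_form)
    (use alt_word_simple_root_pos[OF pq] alt_word_simple_root_neg[OF pq] in auto)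

lemma dihedral_pos_pos_eq_id:
  assumes pq: "p < n" "q < n" "p \<noteq> q" and u: "u \<in> W {p, q}"
    and pos_p: "dihedral_pos p q (u (simple_root p))" and pos_q: "dihedral_pos p q (u (simple_root q))"
  shows "u = id"
  using pq u
proof (cases rule: dihedral_normal_form)
  case (pq_word k)
  have qp: "q < n" "p < n" "q \<noteq> p" "M q p = M p q"
    using assms(1-3) M_sym by auto
  show ?thesis
  proof (rule ccontr)
    assume "u \<noteq> id"
    then have "k \<ge> 1"
      using pq_word by (cases k) auto
    then have "dihedral_neg p q (u (simple_root q))"
      using alt_word_simple_root_neg[OF qp(1-3), of k] pq_word qp(4) dihedral_neg_commute by auto
    then show False
      using pos_q not_dihedral_pos_neg assms(3) by blast
  qed
next
  case (qp_word k)
  then have "dihedral_neg p q (u (simple_root p))"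
    using alt_word_simple_root_neg[OF assms(1-3)] by simp
  then show ?thesis
    using pos_p not_dihedral_pos_neg assms(3) by blast
qed

lemma dihedral_neg_neg_eq_longest:
  assumes pq: "p < n" "q < n" "p \<noteq> q" and u: "u \<in> W {p, q}"
    and neg_p: "dihedral_neg p q (u (simple_root p))" and neg_q: "dihedral_neg p q (u (simple_root q))"
  shows "u = word (alt_word p q (M p q))"
  using pq u
proof (cases rule: dihedral_normal_form)
  case (pq_word k)
  then have "dihedral_pos p q (u (simple_root p))"
    using alt_word_simple_root_pos[OF assms(1-3)] by simp
  then show ?thesis
    using neg_p not_dihedral_pos_neg assms(3) by blast
next
  case (qp_word k)
  have qp': "q < n" "p < n" "q \<noteq> p" "M q p = M p q"
    using assms(1-3) M_sym by auto
  show ?thesis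
  proof (cases "k < M p q")
    case True
    then have "dihedral_pos p q (u (simple_root q))"
      using alt_word_simple_root_pos[OF qp'(1-3), of k] qp'(4) qp_word dihedral_pos_commute by auto
    then show ?thesis
      using neg_q not_dihedral_pos_neg assms(3) by blast
  next
    case False
    then show ?thesis
      using qp_word braid_relation[OF assms(1-3)] by simp
  qed
qed

lemma longest_dihedral_neg:
  assumes pq: "p < n" "q < n" "p \<noteq> q"
  shows "dihedral_neg p q (word (alt_word p q (M p q)) (simple_root p))"
    and "dihedral_neg p q (word (alt_word p q (M p q)) (simple_root q))"
proof -
  have qp: "q < n" "p < n" "q \<noteq> p" "M q p = M p q"
    using pq M_sym by auto
  show "dihedral_neg p q (word (alt_word p q (M p q)) (simple_root p))"
    using alt_word_simple_root_neg[OF pq, of "M p q"] braid_relation[OF pq] M_ge2[OF pq] by simp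
  have "dihedral_neg q p (word (alt_word p q (M q p)) (simple_root q))"
    using alt_word_simple_root_neg[OF qp(1-3), of "M q p"] M_ge2[OF qp(1-3)] by simp
  then show "dihedral_neg p q (word (alt_word p q (M p q)) (simple_root q))"
    using qp(4) dihedral_neg_commute by simp
qed

end

subsection \<open>Positive and negative roots\<close>

context coxeter
begin

definition nonneg_vec :: "(nat \<Rightarrow> real) \<Rightarrow> bool" where
  "nonneg_vec x \<longleftrightarrow> (\<forall>k. x k \<ge> 0)"

definition nonpos_vec :: "(nat \<Rightarrow> real) \<Rightarrow> bool" where
  "nonpos_vec x \<longleftrightarrow> (\<forall>k. x k \<le> 0)"

lemma nonpos_vec_uminus: "nonpos_vec (\<lambda>k. - x k) \<longleftrightarrow> nonneg_vec x"
  unfolding nonpos_vec_def nonneg_vec_def by auto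

lemma nonneg_vec_uminus: "nonneg_vec (\<lambda>k. - x k) \<longleftrightarrow> nonpos_vec x"
  unfolding nonpos_vec_def nonneg_vec_def by auto

lemma nonneg_nonpos_vec_eq_0: "nonneg_vec x \<Longrightarrow> nonpos_vec x \<Longrightarrow> x = (\<lambda>k. 0)"
  unfolding nonneg_vec_def nonpos_vec_def by (rule ext) (meson order_antisym)

lemma Wn_sref: "k < n \<Longrightarrow> sref k \<in> Wn"
  by (rule W_sref) simp

lemma length_in_comp_sref_le:
  assumes w: "w \<in> Wn" and j: "j < n"
  shows "len w \<le> len (w \<circ> sref j) + 1"
proof -
  have "len w \<le> len (w \<circ> sref j) + len (sref j)"
    using length_in_comp[OF W_comp[OF w Wn_sref[OF j]] Wn_sref[OF j]] comp_sref_cancel[OF j, of w]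
    by simp
  then show ?thesis
    using length_in_sref[of j "{..<n}"] j by simp
qed

definition reduced_factorizations :: "nat set \<Rightarrow> ((nat \<Rightarrow> real) \<Rightarrow> (nat \<Rightarrow> real)) \<Rightarrow>
    ((nat \<Rightarrow> real) \<Rightarrow> (nat \<Rightarrow> real)) set" where
  "reduced_factorizations I w = {v \<in> Wn. \<exists>u \<in> W I. w = v \<circ> u \<and> len v + length_in I u = len w}"

lemma reduced_factorization_min_no_descent:
  assumes I: "I \<subseteq> {..<n}" and v: "v \<in> reduced_factorizations I w"
    and v_min: "\<And>v'. v' \<in> reduced_factorizations I w \<Longrightarrow> len v \<le> len v'"
    and k: "k \<in> I"
  shows "len v \<le> len (v \<circ> sref k)"
proof (rule ccontr)
  assume "\<not> ?thesis"
  then have less: "len (v \<circ> sref k) < len v"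
    by simp
  obtain u where vW: "v \<in> Wn" and u: "u \<in> W I" "w = v \<circ> u" "len v + length_in I u = len w"
    using v unfolding reduced_factorizations_def by blast
  have kn: "k < n"
    using k I by auto
  have vk: "v \<circ> sref k \<in> Wn" and ku: "sref k \<circ> u \<in> W I"
    using W_comp[OF vW Wn_sref[OF kn]] W_comp[OF W_sref[OF k] u(1)] by auto
  have w: "w = (v \<circ> sref k) \<circ> (sref k \<circ> u)"
    using u(2) kn by (simp add: comp_assoc sref_cancel_left)
  have "len w \<le> len (v \<circ> sref k) + len (sref k \<circ> u)"
    using w length_in_comp vk W_mono[OF I] ku by (metis subsetD)
  also have "\<dots> \<le> len (v \<circ> sref k) + length_in I (sref k \<circ> u)"
    using length_in_mono[OF I ku] by simp
  finally have "len w \<le> len (v \<circ> sref k) + length_in I (sref k \<circ> u)" .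
  moreover have "length_in I (sref k \<circ> u) \<le> 1 + length_in I u"
    using length_in_comp[OF W_sref[OF k] u(1)] length_in_sref[OF k] by simp
  ultimately have "len (v \<circ> sref k) + length_in I (sref k \<circ> u) = len w"
    using less u(3) by linarith
  then have "v \<circ> sref k \<in> reduced_factorizations I w"
    unfolding reduced_factorizations_def using vk ku w by blast
  then show False
    using v_min less by fastforce
qed

lemma reduced_factorization_right_no_descent:
  assumes I: "I \<subseteq> {..<n}" and v: "v \<in> Wn" and u: "u \<in> W I" "w = v \<circ> u"
    "len v + length_in I u = len w"
    and i: "i \<in> I" and no_descent: "len w \<le> len (w \<circ> sref i)"
  shows "length_in I u \<le> length_in I (u \<circ> sref i)"
proof -
  have ui: "u \<circ> sref i \<in> W I"
    using W_comp[OF u(1) W_sref[OF i]] .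
  have "len (w \<circ> sref i) \<le> len v + len (u \<circ> sref i)"
    using u(2) length_in_comp[OF v, of "u \<circ> sref i"] W_mono[OF I] ui by (auto simp: comp_assoc)
  also have "\<dots> \<le> len v + length_in I (u \<circ> sref i)"
    using length_in_mono[OF I ui] by simp
  finally show ?thesis
    using u(3) no_descent by linarith
qed

lemma exists_descent:
  assumes w: "w \<in> Wn" and nonid: "len w \<noteq> 0"
  obtains j where "j < n" "len (w \<circ> sref j) < len w"
proof -
  obtain xs where xs: "length xs = len w" "set xs \<subseteq> {..<n}" "word xs = w"
    using length_in_word_exists[OF w] by blast
  then obtain ys j where yj: "xs = ys @ [j]"
    using nonid by (metis length_0_conv rev_exhaust)
  have j: "j < n"
    using xs yj by auto
  have "w \<circ> sref j = (word ys \<circ> sref j) \<circ> sref j"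
    using xs(3) yj by (simp add: word_snoc)
  also have "\<dots> = word ys"
    by (rule comp_sref_cancel[OF j])
  finally have "len (w \<circ> sref j) < len w"
    using length_in_le[of ys "{..<n}"] xs yj nonid by simp
  with j show ?thesis
    by (rule that)
qed

lemma comp_sref_reduced_factorization:
  assumes I: "I \<subseteq> {..<n}" and w: "w \<in> Wn" and j: "j \<in> I" and less: "len (w \<circ> sref j) < len w"
  shows "w \<circ> sref j \<in> reduced_factorizations I w"
proof -
  have jn: "j < n"
    using I j by auto
  have "len (w \<circ> sref j) + length_in I (sref j) = len w"
    using less length_in_comp_sref_le[OF w jn] length_in_sref_eq[OF j jn] by simp
  then show ?thesis
    unfolding reduced_factorizations_def
    using W_comp[OF w Wn_sref[OF jn]] W_sref[OF j] comp_sref_cancel[OF jn, of w]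
    by (intro CollectI conjI bexI[of _ "sref j"]) auto
qed

text \<open>Humphreys' argument: write \<open>w = v u\<close> with \<open>u \<in> W\<^sub>{\<^sub>i\<^sub>,\<^sub>j\<^sub>}\<close>, where \<open>w s\<^sub>j\<close> is
shorter than \<open>w\<close>, and \<open>v\<close> of minimal length; induction applies to \<open>v\<close> and the dihedral
case to \<open>u\<close>.\<close>

theorem no_descent_simple_root_nonneg:
  assumes "w \<in> Wn" "i < n" "len w \<le> len (w \<circ> sref i)"
  shows "nonneg_vec (w (simple_root i))"
  using assms
proof (induction "len w" arbitrary: w i rule: less_induct)
  case less
  note w = less.prems(1) and i = less.prems(2) and no_descent = less.prems(3)
  show ?case
  proof (cases "len w = 0")
    case True
    then show ?thesis
      using length_in_eq_0[OF w] by (simp add: nonneg_vec_def simple_root_def)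
  next
    case False
    then obtain j where j: "j < n" and wj: "len (w \<circ> sref j) < len w"
      using exists_descent[OF w] by blast
    have ji: "j \<noteq> i"
      using wj no_descent by auto
    let ?I = "{i, j}"
    have I: "?I \<subseteq> {..<n}"
      using i j by auto
    let ?F = "reduced_factorizations ?I w"
    have wjF: "w \<circ> sref j \<in> ?F"
      using comp_sref_reduced_factorization[OF I w _ wj] by simp
    then obtain v where v: "v \<in> ?F" and v_min: "\<And>v'. v' \<in> ?F \<Longrightarrow> len v \<le> len v'"
      using ex_has_least_nat[of "\<lambda>v. v \<in> ?F" "w \<circ> sref j" len] by blast
    obtain u where vW: "v \<in> Wn" and u: "u \<in> W ?I" "w = v \<circ> u" "len v + length_in ?I u = len w"
      using v unfolding reduced_factorizations_def by blast
    have "len v < len w"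
      using v_min[OF wjF] wj by linarith
    then have v_pos: "nonneg_vec (v (simple_root k))" if "k \<in> ?I" for k
      using less.hyps vW reduced_factorization_min_no_descent[OF I v v_min that] that I by blast
    have "length_in ?I u \<le> length_in ?I (u \<circ> sref i)"
      using reduced_factorization_right_no_descent[OF I vW u _ no_descent] by simp
    then have "dihedral_pos i j (u (simple_root i))"
      using dihedral_no_descent_pos[OF i j ji[symmetric]] u(1) by simp
    then obtain a b where ab: "a \<ge> 0" "b \<ge> 0"
        "u (simple_root i) = (\<lambda>t. a * simple_root i t + b * simple_root j t)"
      unfolding dihedral_pos_def by blast
    have "w (simple_root i) = (\<lambda>t. a * v (simple_root i) t + b * v (simple_root j) t)"
      using u(2) ab(3) W_lin[OF vW] by simp
    then show ?thesis
      using v_pos[of i] v_pos[of j] ab unfolding nonneg_vec_def by auto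
  qed
qed

lemma comp_sref_simple_root: "w \<in> Wn \<Longrightarrow> i < n \<Longrightarrow> (w \<circ> sref i) (simple_root i) = (\<lambda>k. - w (simple_root i) k)"
  using sref_simple_root_self W_uminus by simp

corollary simple_root_image_sign:
  assumes w: "w \<in> Wn" and i: "i < n"
  shows "nonneg_vec (w (simple_root i)) \<longleftrightarrow> \<not> nonpos_vec (w (simple_root i))"
proof -
  have "\<not> (nonneg_vec (w (simple_root i)) \<and> nonpos_vec (w (simple_root i)))"
    using nonneg_nonpos_vec_eq_0 W_simple_root_nonzero[OF w] by blast
  moreover have "nonneg_vec (w (simple_root i)) \<or> nonpos_vec (w (simple_root i))"
  proof (cases "len w \<le> len (w \<circ> sref i)")
    case True
    then show ?thesis
      using no_descent_simple_root_nonneg[OF w i] by auto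
  next
    case False
    then have "len (w \<circ> sref i) \<le> len ((w \<circ> sref i) \<circ> sref i)"
      unfolding comp_sref_cancel[OF i] by simp
    then have "nonneg_vec ((w \<circ> sref i) (simple_root i))"
      by (rule no_descent_simple_root_nonneg[OF W_comp[OF w Wn_sref[OF i]] i])
    then show ?thesis
      using comp_sref_simple_root[OF w i] nonneg_vec_uminus by simp
  qed
  ultimately show ?thesis
    by blast
qed

lemma nonpos_vec_comp_sref:
  "w \<in> Wn \<Longrightarrow> i < n \<Longrightarrow> nonpos_vec ((w \<circ> sref i) (simple_root i)) \<longleftrightarrow> \<not> nonpos_vec (w (simple_root i))"
  using comp_sref_simple_root nonpos_vec_uminus simple_root_image_sign by simp

end

subsection \<open>Descent statistics of a finite Coxeter group\<close>

locale finite_coxeter = coxeter +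
  assumes finite_W: "finite (W {..<n})"
begin

lemma Wn_nonempty: "Wn \<noteq> {}"
  using W_id by auto

lemma card_descent:
  assumes i: "i < n"
  shows "2 * card {w \<in> Wn. nonpos_vec (w (simple_root i))} = card Wn"
proof -
  let ?N = "{w \<in> Wn. nonpos_vec (w (simple_root i))}"
  have closed: "w \<circ> sref i \<in> Wn" if "w \<in> Wn" for w
    using W_comp[OF that Wn_sref[OF i]] .
  have "bij_betw (\<lambda>w. w \<circ> sref i) ?N (Wn - ?N)"
  proof (rule bij_betw_byWitness[of _ "\<lambda>w. w \<circ> sref i"])
    show "\<forall>w\<in>?N. w \<circ> sref i \<circ> sref i = w" "\<forall>w\<in>Wn - ?N. w \<circ> sref i \<circ> sref i = w"
      using comp_sref_cancel[OF i] by auto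
    show "(\<lambda>w. w \<circ> sref i) ` ?N \<subseteq> Wn - ?N" "(\<lambda>w. w \<circ> sref i) ` (Wn - ?N) \<subseteq> ?N"
      using nonpos_vec_comp_sref[OF _ i] closed by auto
  qed
  then have "card ?N = card (Wn - ?N)"
    by (rule bij_betw_same_card)
  moreover have "card Wn = card ?N + card (Wn - ?N)"
    using card_Diff_subset[of ?N Wn] finite_W card_mono[of Wn ?N] by (auto simp: finite_subset)
  ultimately show ?thesis
    by simp
qed

lemma W_nonneg_pair_image:
  assumes v: "v \<in> Wn" and pq: "p \<noteq> q"
    and vp: "nonneg_vec (v (simple_root p))" and vq: "nonneg_vec (v (simple_root q))"
    and x: "dihedral_pos p q x"
  shows "nonneg_vec (v x) \<and> \<not> nonpos_vec (v x)"
proof -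
  obtain a b where ab: "a \<ge> 0" "b \<ge> 0" "x = (\<lambda>t. a * simple_root p t + b * simple_root q t)"
    using x unfolding dihedral_pos_def by blast
  have vx: "v x = (\<lambda>t. a * v (simple_root p) t + b * v (simple_root q) t)"
    using ab(3) W_lin[OF v] by simp
  have "nonneg_vec (v x)"
    unfolding vx using vp vq ab unfolding nonneg_vec_def by auto
  moreover have "v x \<noteq> (\<lambda>k. 0)"
    using W_inj[of "{..<n}" v x "\<lambda>k. 0"] v W_zero[OF v] dihedral_pos_nonzero[OF pq x] by auto
  ultimately show ?thesis
    using nonneg_nonpos_vec_eq_0 by blast
qed

definition min_coset_reps :: "nat \<Rightarrow> nat \<Rightarrow> ((nat \<Rightarrow> real) \<Rightarrow> (nat \<Rightarrow> real)) set" where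
  "min_coset_reps p q = {v \<in> Wn. nonneg_vec (v (simple_root p)) \<and> nonneg_vec (v (simple_root q))}"

lemma min_coset_reps_commute: "min_coset_reps p q = min_coset_reps q p"
  unfolding min_coset_reps_def by auto

lemma min_coset_rep_sign_fst:
  assumes pq: "p < n" "q < n" "p \<noteq> q" and v: "v \<in> min_coset_reps p q" and x: "x \<in> W {p, q}"
  shows "nonpos_vec (v (x (simple_root p))) \<longleftrightarrow> dihedral_neg p q (x (simple_root p))"
    and "nonneg_vec (v (x (simple_root p))) \<longleftrightarrow> dihedral_pos p q (x (simple_root p))"
proof -
  have vW: "v \<in> Wn" and vp: "nonneg_vec (v (simple_root p))" and vq: "nonneg_vec (v (simple_root q))"
    using v unfolding min_coset_reps_def by auto
  have neg_image: "nonpos_vec (v y) \<and> \<not> nonneg_vec (v y)" if "dihedral_neg p q y" for y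
    using W_nonneg_pair_image[OF vW pq(3) vp vq, of "\<lambda>k. - y k"] that W_uminus[OF vW]
      nonneg_vec_uminus nonpos_vec_uminus
    unfolding dihedral_neg_def by simp
  show "nonpos_vec (v (x (simple_root p))) \<longleftrightarrow> dihedral_neg p q (x (simple_root p))"
    and "nonneg_vec (v (x (simple_root p))) \<longleftrightarrow> dihedral_pos p q (x (simple_root p))"
    using dihedral_root_sign[OF pq x] W_nonneg_pair_image[OF vW pq(3) vp vq] neg_image by blast+
qed

lemma min_coset_rep_sign_snd:
  assumes pq: "p < n" "q < n" "p \<noteq> q" and v: "v \<in> min_coset_reps p q" and x: "x \<in> W {p, q}"
  shows "nonpos_vec (v (x (simple_root q))) \<longleftrightarrow> dihedral_neg p q (x (simple_root q))"
    and "nonneg_vec (v (x (simple_root q))) \<longleftrightarrow> dihedral_pos p q (x (simple_root q))"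
  using min_coset_rep_sign_fst[of q p v x] pq v x min_coset_reps_commute[of p q]
    dihedral_neg_commute dihedral_pos_commute by (simp_all add: insert_commute)

lemma inj_on_comp_min_coset_reps:
  assumes pq: "p < n" "q < n" "p \<noteq> q"
  shows "inj_on (\<lambda>(v, x). v \<circ> x) (min_coset_reps p q \<times> W {p, q})"
proof (rule inj_onI, clarify)
  let ?I = "{p, q}"
  have I: "?I \<subseteq> {..<n}"
    using pq by auto
  fix v x v' x'
  assume v: "v \<in> min_coset_reps p q" and x: "x \<in> W ?I"
    and v': "v' \<in> min_coset_reps p q" and x': "x' \<in> W ?I" and eq: "v \<circ> x = v' \<circ> x'"
  obtain x'' where x'': "x'' \<in> W ?I" "x' \<circ> x'' = id"
    using W_inverse[OF I x'] by metis
  define y where "y = x \<circ> x''"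
  have y: "y \<in> W ?I"
    unfolding y_def using W_comp x x''(1) by auto
  have vy: "v' = v \<circ> y"
    unfolding y_def using eq x''(2) by (metis comp_assoc comp_id)
  have "dihedral_pos p q (y (simple_root p))" "dihedral_pos p q (y (simple_root q))"
    using min_coset_rep_sign_fst(2)[OF pq v y] min_coset_rep_sign_snd(2)[OF pq v y] v' vy
    unfolding min_coset_reps_def by auto
  then have "y = id"
    using dihedral_pos_pos_eq_id[OF pq y] by blast
  then have "v' = v"
    using vy by simp
  moreover have "x = x'"
  proof
    fix t
    have "v (x t) = v (x' t)"
      using eq \<open>v' = v\<close> by (metis comp_apply)
    then show "x t = x' t"
      using W_inj[of "{..<n}" v] v unfolding min_coset_reps_def by auto
  qed
  ultimately show "v = v' \<and> x = x'"
    by simp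
qed

text \<open>An element of minimal length in the coset \<open>w W\<^sub>{\<^sub>p\<^sub>,\<^sub>q\<^sub>}\<close> has no descent at
\<open>p, q\<close>, hence is a minimal coset representative by Humphreys' lemma.\<close>

lemma comp_min_coset_reps_image:
  assumes pq: "p < n" "q < n" "p \<noteq> q"
  shows "(\<lambda>(v, x). v \<circ> x) ` (min_coset_reps p q \<times> W {p, q}) = Wn"
proof
  let ?I = "{p, q}"
  have I: "?I \<subseteq> {..<n}"
    using pq by auto
  show "(\<lambda>(v, x). v \<circ> x) ` (min_coset_reps p q \<times> W ?I) \<subseteq> Wn"
    unfolding min_coset_reps_def using W_comp W_mono[OF I] by auto
  show "Wn \<subseteq> (\<lambda>(v, x). v \<circ> x) ` (min_coset_reps p q \<times> W ?I)"
  proof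
    fix w
    assume w: "w \<in> Wn"
    let ?C = "(\<lambda>x. w \<circ> x) ` W ?I"
    have "w \<in> ?C"
      using W_id[of ?I] by (intro image_eqI[of _ _ id]) auto
    then obtain v where "v \<in> ?C" and v_min: "\<And>v'. v' \<in> ?C \<Longrightarrow> len v \<le> len v'"
      using ex_has_least_nat[of "\<lambda>v. v \<in> ?C" w len] by blast
    then obtain x0 where x0: "x0 \<in> W ?I" "v = w \<circ> x0"
      by auto
    have vW: "v \<in> Wn"
      using x0 W_comp[OF w] W_mono[OF I] by auto
    have "nonneg_vec (v (simple_root k))" if k: "k \<in> ?I" for k
    proof -
      have "v \<circ> sref k = w \<circ> (x0 \<circ> sref k)" and "x0 \<circ> sref k \<in> W ?I"
        using x0 W_comp[OF x0(1) W_sref[OF k]] by (auto simp: comp_assoc)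
      then have "len v \<le> len (v \<circ> sref k)"
        using v_min by auto
      then show ?thesis
        using no_descent_simple_root_nonneg[OF vW] k I by blast
    qed
    then have "v \<in> min_coset_reps p q"
      unfolding min_coset_reps_def using vW by auto
    moreover obtain x1 where "x1 \<in> W ?I" "x0 \<circ> x1 = id"
      using W_inverse[OF I x0(1)] by metis
    moreover from this have "w = v \<circ> x1"
      using x0(2) by (metis comp_assoc comp_id)
    ultimately show "w \<in> (\<lambda>(v, x). v \<circ> x) ` (min_coset_reps p q \<times> W ?I)"
      by force
  qed
qed

lemma double_descent_iff_longest:
  assumes pq: "p < n" "q < n" "p \<noteq> q" and v: "v \<in> min_coset_reps p q" and x: "x \<in> W {p, q}"
  shows "nonpos_vec (v (x (simple_root p))) \<and> nonpos_vec (v (x (simple_root q)))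
    \<longleftrightarrow> x = word (alt_word p q (M p q))"
  using min_coset_rep_sign_fst(1)[OF pq v x] min_coset_rep_sign_snd(1)[OF pq v x]
    dihedral_neg_neg_eq_longest[OF pq x] longest_dihedral_neg[OF pq] by auto

lemma comp_min_coset_reps_longest_image:
  assumes pq: "p < n" "q < n" "p \<noteq> q"
  defines "w0 \<equiv> word (alt_word p q (M p q))"
  shows "(\<lambda>(v, x). v \<circ> x) ` (min_coset_reps p q \<times> {w0})
    = {w \<in> Wn. nonpos_vec (w (simple_root p)) \<and> nonpos_vec (w (simple_root q))}"
    (is "?f ` (?R \<times> {w0}) = {w \<in> Wn. ?P w}")
proof (intro set_eqI iffI)
  have w0: "w0 \<in> W {p, q}"
    unfolding w0_def using W_alt_word[of p q "{p, q}"] by simp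
  fix w
  {
    assume "w \<in> ?f ` (?R \<times> {w0})"
    then obtain v where v: "v \<in> ?R" and w: "w = v \<circ> w0"
      by auto
    have "w \<in> ?f ` (?R \<times> W {p, q})"
      using v w0 w by auto
    then show "w \<in> {w \<in> Wn. ?P w}"
      using double_descent_iff_longest[OF pq v w0] comp_min_coset_reps_image[OF pq] w
      unfolding w0_def by simp
  next
    assume "w \<in> {w \<in> Wn. ?P w}"
    then have "w \<in> ?f ` (?R \<times> W {p, q})" and P: "?P w"
      using comp_min_coset_reps_image[OF pq] by auto
    then obtain v x where v: "v \<in> ?R" and x: "x \<in> W {p, q}" and w: "w = v \<circ> x"
      by auto
    then have "x = w0"
      using double_descent_iff_longest[OF pq v x] P unfolding w0_def by simp
    then show "w \<in> ?f ` (?R \<times> {w0})"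
      using v w by (intro image_eqI[of _ _ "(v, w0)"]) auto
  }
qed

lemma card_double_descent:
  assumes pq: "p < n" "q < n" "p \<noteq> q"
  shows "card {w \<in> Wn. nonpos_vec (w (simple_root p)) \<and> nonpos_vec (w (simple_root q))} * (2 * M p q)
    = card Wn"
proof -
  let ?R = "min_coset_reps p q" and ?f = "\<lambda>(v, x). v \<circ> x"
  let ?w0 = "word (alt_word p q (M p q))"
  have w0: "?w0 \<in> W {p, q}"
    using W_alt_word[of p q "{p, q}"] by simp
  have bij: "bij_betw ?f (?R \<times> W {p, q}) Wn"
    unfolding bij_betw_def
    using inj_on_comp_min_coset_reps[OF pq] comp_min_coset_reps_image[OF pq] by blast
  have "bij_betw ?f (?R \<times> {?w0})
      {w \<in> Wn. nonpos_vec (w (simple_root p)) \<and> nonpos_vec (w (simple_root q))}"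
    by (rule bij_betw_subset[OF bij _ comp_min_coset_reps_longest_image[OF pq]]) (use w0 in auto)
  then have "card {w \<in> Wn. nonpos_vec (w (simple_root p)) \<and> nonpos_vec (w (simple_root q))} = card ?R"
    using bij_betw_same_card by (fastforce simp: card_cartesian_product)
  moreover have "card Wn = card ?R * card (W {p, q})"
    using bij_betw_same_card[OF bij] by (simp add: card_cartesian_product)
  ultimately show ?thesis
    using card_dihedral_group[OF pq] by simp
qed

lemma simple_root_image_neg_root_iff:
  assumes w: "w \<in> Wn" and i: "i < n"
  shows "w (simple_root i) \<in> cox_neg_roots M n \<longleftrightarrow> nonpos_vec (w (simple_root i))"
proof -
  have V: "\<forall>k\<ge>n. w (simple_root i) k = 0"
    using W_Vn[OF w simple_root_Vn[OF i]] unfolding Vn_def by simp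
  have "w (simple_root i) \<in> cox_roots M n"
    unfolding cox_roots_def cox_group_eq using w i by blast
  moreover have "(\<forall>k<n. w (simple_root i) k \<le> 0) \<longleftrightarrow> (\<forall>k. w (simple_root i) k \<le> 0)"
    using V by (metis linorder_not_le order.refl)
  ultimately show ?thesis
    unfolding cox_neg_roots_def nonpos_vec_def by blast
qed

definition descent_ind :: "nat \<Rightarrow> ((nat \<Rightarrow> real) \<Rightarrow> (nat \<Rightarrow> real)) \<Rightarrow> real" where
  "descent_ind i w = (if nonpos_vec (w (simple_root i)) then 1 else 0)"

lemma descents_eq_sum_descent_ind:
  assumes w: "w \<in> Wn"
  shows "real (descents M n w) = (\<Sum>i<n. descent_ind i w)"
proof -
  have "{i. i < n \<and> w (simple_root i) \<in> cox_neg_roots M n} = {i \<in> {..<n}. nonpos_vec (w (simple_root i))}"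
    using simple_root_image_neg_root_iff[OF w] by auto
  then show ?thesis
    unfolding descents_def descent_ind_def by (simp add: sum.If_cases Int_def)
qed

lemma descent_ind_mult:
  "descent_ind i w * descent_ind j w
    = (if nonpos_vec (w (simple_root i)) \<and> nonpos_vec (w (simple_root j)) then 1 else 0)"
  by (simp add: descent_ind_def)

lemma expectation_Wn: "measure_pmf.expectation (pmf_of_set Wn) f = sum f Wn / card Wn"
  for f :: "_ \<Rightarrow> real"
  using integral_pmf_of_set[OF Wn_nonempty finite_W] by simp

lemma expectation_descent_ind:
  "i < n \<Longrightarrow> measure_pmf.expectation (pmf_of_set Wn) (descent_ind i) = 1 / 2"
  unfolding expectation_Wn descent_ind_def
  using card_descent[of i] finite_W Wn_nonempty
  by (simp add: sum.If_cases Int_def field_simps flip: of_nat_mult)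

lemma expectation_descent_ind_pair:
  assumes "i < n" "j < n" "i \<noteq> j"
  shows "measure_pmf.expectation (pmf_of_set Wn) (\<lambda>w. descent_ind i w * descent_ind j w)
    = 1 / (2 * real (M i j))"
proof -
  have "real (M i j) > 0"
    using M_ge2[OF assms] by simp
  moreover have "real (card {w \<in> Wn. nonpos_vec (w (simple_root i)) \<and> nonpos_vec (w (simple_root j))})
      * (2 * real (M i j)) = real (card Wn)"
    using arg_cong[OF card_double_descent[OF assms], of real] by simp
  ultimately show ?thesis
    unfolding expectation_Wn descent_ind_mult using finite_W Wn_nonempty
    by (simp add: sum.If_cases Int_def field_simps)
qed

lemma finite_set_pmf_Wn: "finite (set_pmf (pmf_of_set Wn))"
  using finite_W Wn_nonempty by simp

lemma expectation_descents:
  "measure_pmf.expectation (pmf_of_set Wn) (\<lambda>w. real (descents M n w)) = real n / 2"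
proof -
  let ?E = "measure_pmf.expectation (pmf_of_set Wn)"
  have "?E (\<lambda>w. real (descents M n w)) = ?E (\<lambda>w. \<Sum>i<n. descent_ind i w)"
    unfolding expectation_Wn
    by (intro arg_cong[where f = "\<lambda>s. s / _"] sum.cong) (simp_all add: descents_eq_sum_descent_ind)
  also have "\<dots> = (\<Sum>i<n. ?E (descent_ind i))"
    by (simp add: integral_sum integrable_measure_pmf_finite[OF finite_set_pmf_Wn])
  also have "\<dots> = (\<Sum>i<n. 1 / 2)"
    using expectation_descent_ind by (intro sum.cong) auto
  finally show ?thesis
    by simp
qed

lemma expectation_descents_squared:
  "measure_pmf.expectation (pmf_of_set Wn) (\<lambda>w. (real (descents M n w))\<^sup>2)
    = real n / 2 + (\<Sum>i<n. \<Sum>j\<in>{..<n}-{i}. 1 / (2 * real (M i j)))"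
proof -
  let ?E = "measure_pmf.expectation (pmf_of_set Wn)"
  have "?E (\<lambda>w. (real (descents M n w))\<^sup>2) = ?E (\<lambda>w. \<Sum>i<n. \<Sum>j<n. descent_ind i w * descent_ind j w)"
    unfolding expectation_Wn
    by (intro arg_cong[where f = "\<lambda>s. s / _"] sum.cong)
      (simp_all add: descents_eq_sum_descent_ind power2_eq_square sum_product)
  also have "\<dots> = (\<Sum>i<n. \<Sum>j<n. ?E (\<lambda>w. descent_ind i w * descent_ind j w))"
    by (simp add: integral_sum integrable_measure_pmf_finite[OF finite_set_pmf_Wn])
  also have "\<dots> = (\<Sum>i<n. 1 / 2 + (\<Sum>j\<in>{..<n}-{i}. 1 / (2 * real (M i j))))"
  proof (rule sum.cong[OF refl])
    fix i
    assume "i \<in> {..<n}"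
    then have i: "i < n"
      by simp
    have sq: "(\<lambda>w. descent_ind i w * descent_ind i w) = descent_ind i"
      unfolding descent_ind_def by auto
    show "(\<Sum>j<n. ?E (\<lambda>w. descent_ind i w * descent_ind j w))
        = 1 / 2 + (\<Sum>j\<in>{..<n}-{i}. 1 / (2 * real (M i j)))"
      using i expectation_descent_ind[OF i] expectation_descent_ind_pair[OF i]
      by (simp add: sum.remove[of "{..<n}" i] sq)
  qed
  finally show ?thesis
    by (simp add: sum.distrib)
qed

theorem des_variance_eq:
  "des_variance M n = (\<Sum>i<n. 1 / 4 - (\<Sum>j\<in>{..<n}-{i}. 1 / 4 - 1 / (2 * real (M i j))))"
proof -
  let ?E = "measure_pmf.expectation (pmf_of_set Wn)" and ?X = "\<lambda>w. real (descents M n w)"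
  have "des_variance M n = ?E (\<lambda>w. (?X w)\<^sup>2) - (?E ?X)\<^sup>2"
    unfolding des_variance_def cox_group_eq
    by (rule measure_pmf.variance_eq) (rule integrable_measure_pmf_finite[OF finite_set_pmf_Wn])+
  also have "\<dots> = real n / 4 - real n * (real n - 1) / 4 + (\<Sum>i<n. \<Sum>j\<in>{..<n}-{i}. 1 / (2 * real (M i j)))"
    unfolding expectation_descents expectation_descents_squared by (simp add: power2_eq_square field_simps)
  also have "real n * (real n - 1) / 4 = (\<Sum>i<n. \<Sum>j\<in>{..<n}-{i}. (1::real) / 4)"
    by (cases n) (simp_all add: algebra_simps)
  finally show ?thesis
    by (simp add: sum_subtractf)
qed

end

subsection \<open>Positive definiteness of the Tits form\<close>

lemma linear_coeff_zero_if_quadratic_nonneg: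
  fixes a b :: real
  assumes "\<And>t. 2 * t * a + t * t * b \<ge> 0"
  shows "a = 0"
proof (rule ccontr)
  assume a: "a \<noteq> 0"
  define B where "B = \<bar>b\<bar> + 1"
  have B: "B > 0" "b < B"
    unfolding B_def by auto
  define t where "t = - a / B"
  have "2 * t * a + t * t * b = (a * a) * (b - 2 * B) / (B * B)"
    unfolding t_def using B by (simp add: field_simps)
  moreover have "a * a > 0"
    using a not_real_square_gt_zero by blast
  ultimately have "2 * t * a + t * t * b < 0"
    using B by (simp add: mult_pos_neg divide_neg_pos)
  then show False
    using assms[of t] by simp
qed

context coxeter
begin

definition bform :: "(nat \<Rightarrow> real) \<Rightarrow> (nat \<Rightarrow> real) \<Rightarrow> real" where
  "bform x y = (\<Sum>k<n. x k * form k y)"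

lemma bform_lin_left: "bform (\<lambda>k. a * x k + b * y k) z = a * bform x z + b * bform y z"
  by (simp add: bform_def distrib_right sum.distrib sum_distrib_left mult.assoc)

lemma bform_lin_right: "bform z (\<lambda>k. a * x k + b * y k) = a * bform z x + b * bform z y"
  by (simp add: bform_def form_lin distrib_left sum.distrib sum_distrib_left algebra_simps)

lemma bform_simple_root_left:
  assumes "i < n"
  shows "bform (simple_root i) y = form i y"
proof -
  have "bform (simple_root i) y = (\<Sum>k<n. if k = i then form k y else 0)"
    unfolding bform_def simple_root_def by (intro sum.cong) auto
  then show ?thesis
    using assms by simp
qed

lemma bform_commute: "bform x y = bform y x"
proof -
  have "bform x y = (\<Sum>k<n. \<Sum>j<n. x k * y j * - cos (pi / real (M k j)))"
    by (simp add: bform_def form_def cox_form_def sum_distrib_left algebra_simps)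
  also have "\<dots> = (\<Sum>j<n. \<Sum>k<n. y j * x k * - cos (pi / real (M j k)))"
    by (subst sum.swap) (intro sum.cong refl, simp add: M_sym mult.commute)
  also have "\<dots> = bform y x"
    by (simp add: bform_def form_def cox_form_def sum_distrib_left algebra_simps)
  finally show ?thesis .
qed

lemma bform_simple_root_right: "i < n \<Longrightarrow> bform y (simple_root i) = form i y"
  by (subst bform_commute) (rule bform_simple_root_left)

lemma bform_sref: "i < n \<Longrightarrow> bform (sref i x) y = bform x (sref i y)"
  by (subst (1 2) sref_eq_comb)
    (simp only: bform_lin_left bform_lin_right bform_simple_root_left bform_simple_root_right, simp)

lemma bform_scale: "bform (\<lambda>k. c * x k) (\<lambda>k. c * x k) = c * c * bform x x"
  using bform_lin_left[of c x 0 x "\<lambda>k. c * x k"] bform_lin_right[of x c x 0 x] by simp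

lemma bform_expand:
  "bform (\<lambda>k. x k + t * y k) (\<lambda>k. x k + t * y k) = bform x x + 2 * t * bform x y + t * t * bform y y"
  using bform_lin_left[of 1 x t y "\<lambda>k. x k + t * y k"] bform_lin_right[of x 1 x t y]
    bform_lin_right[of y 1 x t y] bform_commute[of y x]
  by (simp add: algebra_simps)

lemma continuous_on_bform: "continuous_on UNIV (\<lambda>x. bform x x)"
  unfolding bform_def form_def cox_form_def
  by (intro continuous_on_sum continuous_on_mult continuous_on_const continuous_on_product_coordinates)

lemma continuous_on_sref: "continuous_on UNIV (sref i)"
proof (rule continuous_on_coordinatewise_then_product)
  fix k
  have "continuous_on UNIV (\<lambda>x::nat \<Rightarrow> real. \<Sum>j<n. - cos (pi / real (M i j)) * x j)"
    by (intro continuous_on_sum continuous_on_mult continuous_on_const continuous_on_product_coordinates)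
  then show "continuous_on UNIV (\<lambda>x. sref i x k)"
    unfolding sref_apply form_def cox_form_def
    by (intro continuous_on_diff continuous_on_mult continuous_on_const continuous_on_product_coordinates)
qed

lemma continuous_on_word: "continuous_on UNIV (word xs)"
proof (induction xs)
  case (Cons a xs)
  show ?case
    unfolding word_Cons
    by (rule continuous_on_compose[OF Cons]) (rule continuous_on_subset[OF continuous_on_sref], simp)
qed (simp add: continuous_on_id)

lemma continuous_on_W:
  assumes "w \<in> W J"
  shows "continuous_on UNIV (\<lambda>x. w x k)"
proof -
  obtain xs where "w = word xs"
    using assms unfolding W_def by blast
  then show ?thesis
    using continuous_on_product_then_coordinatewise[OF continuous_on_word[of xs], of k] by simp
qed

lemma Vn_lin: "x \<in> Vn \<Longrightarrow> y \<in> Vn \<Longrightarrow> (\<lambda>k. a * x k + b * y k) \<in> Vn"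
  unfolding Vn_def by auto

lemma closed_Vn: "closed Vn"
proof -
  have "Vn = (\<Inter>k\<in>{n..}. {x. x k = 0})"
    unfolding Vn_def by auto
  moreover have "closed (\<Inter>k\<in>{n..}. {x::nat \<Rightarrow> real. x k = 0})"
    by (intro closed_INT ballI closed_Collect_eq continuous_on_product_coordinates continuous_on_const)
  ultimately show ?thesis
    by simp
qed

lemma Vn_eq_sum_simple_root: "x \<in> Vn \<Longrightarrow> x = (\<lambda>k. \<Sum>i<n. x i * simple_root i k)"
  by (rule ext) (auto simp: Vn_def simple_root_def if_distrib not_le cong: if_cong)

end

context finite_coxeter
begin

definition inv_inner :: "(nat \<Rightarrow> real) \<Rightarrow> (nat \<Rightarrow> real) \<Rightarrow> real" where
  "inv_inner x y = (\<Sum>w\<in>Wn. \<Sum>k<n. w x k * w y k)"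

lemma inv_inner_commute: "inv_inner x y = inv_inner y x"
  by (simp add: inv_inner_def mult.commute)

lemma inv_inner_lin_right: "inv_inner z (\<lambda>k. a * x k + b * y k) = a * inv_inner z x + b * inv_inner z y"
proof -
  have "inv_inner z (\<lambda>k. a * x k + b * y k) = (\<Sum>w\<in>Wn. \<Sum>k<n. w z k * (a * w x k + b * w y k))"
    unfolding inv_inner_def by (intro sum.cong refl) (simp add: W_lin)
  then show ?thesis
    by (simp add: inv_inner_def sum_distrib_left distrib_left sum.distrib algebra_simps)
qed

lemma inv_inner_lin_left: "inv_inner (\<lambda>k. a * x k + b * y k) z = a * inv_inner x z + b * inv_inner y z"
  by (subst inv_inner_commute, subst inv_inner_lin_right, simp add: inv_inner_commute)

lemma inv_inner_sref:
  assumes i: "i < n"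
  shows "inv_inner (sref i x) (sref i y) = inv_inner x y"
proof -
  have bij: "bij_betw (\<lambda>w. w \<circ> sref i) Wn Wn"
  proof (rule bij_betw_byWitness[of _ "\<lambda>w. w \<circ> sref i"])
    show "\<forall>w\<in>Wn. w \<circ> sref i \<circ> sref i = w" "\<forall>w\<in>Wn. w \<circ> sref i \<circ> sref i = w"
      using comp_sref_cancel[OF i] by auto
    show "(\<lambda>w. w \<circ> sref i) ` Wn \<subseteq> Wn" "(\<lambda>w. w \<circ> sref i) ` Wn \<subseteq> Wn"
      using W_comp Wn_sref[OF i] by auto
  qed
  have "inv_inner (sref i x) (sref i y) = (\<Sum>w\<in>Wn. (\<lambda>w. \<Sum>k<n. w x k * w y k) (w \<circ> sref i))"
    unfolding inv_inner_def by simp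
  also have "\<dots> = inv_inner x y"
    unfolding inv_inner_def by (rule sum.reindex_bij_betw[OF bij])
  finally show ?thesis .
qed

lemma inv_inner_sref_right: "i < n \<Longrightarrow> inv_inner (sref i x) y = inv_inner x (sref i y)"
  using inv_inner_sref[of i x "sref i y"] sref_sref by simp

lemma inv_inner_ge_sum_squares: "inv_inner x x \<ge> (\<Sum>k<n. x k * x k)"
proof -
  have "(\<lambda>w. \<Sum>k<n. w x k * w x k) id \<le> (\<Sum>w\<in>Wn. \<Sum>k<n. w x k * w x k)"
    by (rule member_le_sum) (auto simp: finite_W W_id[unfolded id_def] intro!: sum_nonneg)
  then show ?thesis
    unfolding inv_inner_def by simp
qed

lemma inv_inner_nonneg: "inv_inner x x \<ge> 0"
  using inv_inner_ge_sum_squares[of x] sum_nonneg[of "{..<n}" "\<lambda>k. x k * x k"] by simp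

lemma inv_inner_pos: "x \<in> Vn \<Longrightarrow> x \<noteq> (\<lambda>k. 0) \<Longrightarrow> inv_inner x x > 0"
proof -
  assume x: "x \<in> Vn" "x \<noteq> (\<lambda>k. 0)"
  then obtain k where k: "x k \<noteq> 0"
    by auto
  with x(1) have "k < n"
    unfolding Vn_def using not_le by blast
  note k = k this
  have "0 < x k * x k"
    using k not_real_square_gt_zero by blast
  also have "\<dots> \<le> (\<Sum>k<n. x k * x k)"
    using k by (intro member_le_sum) auto
  also have "\<dots> \<le> inv_inner x x"
    by (rule inv_inner_ge_sum_squares)
  finally show ?thesis .
qed

lemma inv_inner_scale: "inv_inner (\<lambda>k. c * x k) (\<lambda>k. c * x k) = c * c * inv_inner x x"
  using inv_inner_lin_left[of c x 0 x "\<lambda>k. c * x k"] inv_inner_lin_right[of x c x 0 x] by simp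

lemma inv_inner_expand:
  "inv_inner (\<lambda>k. x k + t * y k) (\<lambda>k. x k + t * y k)
    = inv_inner x x + 2 * t * inv_inner x y + t * t * inv_inner y y"
  using inv_inner_lin_left[of 1 x t y "\<lambda>k. x k + t * y k"] inv_inner_lin_right[of x 1 x t y]
    inv_inner_lin_right[of y 1 x t y] inv_inner_commute[of y x]
  by (simp add: algebra_simps)

lemma continuous_on_inv_inner: "continuous_on UNIV (\<lambda>x. inv_inner x x)"
  unfolding inv_inner_def by (intro continuous_on_sum continuous_on_mult continuous_on_W) auto

text \<open>A vector \<open>B\<close>-orthogonal to all simple roots is fixed by \<open>W\<close>, so its \<open>inv_inner\<close>-product
with each \<open>\<alpha>\<^sub>i\<close> equals its own negative.\<close>

lemma Vn_orthogonal_simple_roots_eq_0: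
  assumes x: "x \<in> Vn" and orth: "\<And>i. i < n \<Longrightarrow> form i x = 0"
  shows "x = (\<lambda>k. 0)"
proof (rule ccontr)
  assume nz: "x \<noteq> (\<lambda>k. 0)"
  have inner_root: "inv_inner x (simple_root i) = 0" if i: "i < n" for i
  proof -
    have "inv_inner x (simple_root i) = inv_inner (sref i x) (sref i (simple_root i))"
      using inv_inner_sref[OF i] by simp
    also have "\<dots> = inv_inner x (\<lambda>k. (-1) * simple_root i k + 0 * simple_root i k)"
      using sref_fixed[OF orth[OF i]] sref_simple_root_self[OF i] by simp
    also have "\<dots> = - inv_inner x (simple_root i)"
      by (simp only: inv_inner_lin_right)
    finally show ?thesis
      by simp
  qed
  have wx: "w x = (\<lambda>k. \<Sum>i<n. x i * w (simple_root i) k)" if w: "w \<in> Wn" for w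
    using W_sum[OF w, of "{..<n}" x simple_root] Vn_eq_sum_simple_root[OF x] by simp
  have "inv_inner x x = (\<Sum>w\<in>Wn. \<Sum>k<n. w x k * (\<Sum>i<n. x i * w (simple_root i) k))"
    unfolding inv_inner_def using wx by (intro sum.cong refl) simp
  also have "\<dots> = (\<Sum>w\<in>Wn. \<Sum>k<n. \<Sum>i<n. x i * (w x k * w (simple_root i) k))"
    by (intro sum.cong refl) (simp add: sum_distrib_left mult.left_commute)
  also have "\<dots> = (\<Sum>i<n. \<Sum>w\<in>Wn. \<Sum>k<n. x i * (w x k * w (simple_root i) k))"
    by (subst sum.swap, rule sum.cong[OF refl], rule sum.swap)
  also have "\<dots> = (\<Sum>i<n. x i * inv_inner x (simple_root i))"
    unfolding inv_inner_def by (simp add: sum_distrib_left)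
  also have "\<dots> = 0"
    using inner_root by simp
  finally show False
    using inv_inner_pos[OF x nz] by simp
qed

definition inv_sphere :: "(nat \<Rightarrow> real) set" where
  "inv_sphere = {x \<in> Vn. inv_inner x x = 1}"

lemma compact_inv_sphere: "compact inv_sphere"
proof -
  define box where "box = Pi\<^sub>E UNIV (\<lambda>k. if k < n then {-1..1} else {0 :: real})"
  have "compactin (product_topology (\<lambda>i. euclidean) UNIV) box"
    unfolding box_def by (subst compactin_PiE) auto
  then have "compact box"
    by (simp add: euclidean_product_topology)
  moreover have "closed {x. inv_inner x x = 1}"
    by (intro closed_Collect_eq continuous_on_inv_inner continuous_on_const)
  moreover have sub: "inv_sphere \<subseteq> box"
  proof
    fix x
    assume x: "x \<in> inv_sphere"
    have "x k \<in> (if k < n then {-1..1} else {0})" for k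
    proof (cases "k < n")
      case True
      have "x k * x k \<le> (\<Sum>k<n. x k * x k)"
        using True by (intro member_le_sum) auto
      also have "\<dots> \<le> 1"
        using inv_inner_ge_sum_squares[of x] x unfolding inv_sphere_def by simp
      finally have "(x k)\<^sup>2 \<le> 1"
        by (simp add: power2_eq_square)
      then have "\<bar>x k\<bar> \<le> 1"
        using abs_square_le_1 by blast
      then show ?thesis
        using True by auto
    qed (use x in \<open>auto simp: inv_sphere_def Vn_def\<close>)
    then show "x \<in> box"
      unfolding box_def by auto
  qed
  moreover have "inv_sphere = box \<inter> (Vn \<inter> {x. inv_inner x x = 1})"
    using sub unfolding inv_sphere_def by auto
  ultimately show ?thesis
    using closed_Vn by (simp add: closed_Int compact_Int_closed)
qed

lemma scale_into_inv_sphere: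
  assumes "z \<in> Vn" "z \<noteq> (\<lambda>k. 0)"
  defines "c \<equiv> 1 / sqrt (inv_inner z z)"
  shows "(\<lambda>k. c * z k) \<in> inv_sphere" and "c * c * inv_inner z z = 1"
proof -
  show cc: "c * c * inv_inner z z = 1"
    using inv_inner_pos[OF assms(1,2)] by (simp add: c_def)
  show "(\<lambda>k. c * z k) \<in> inv_sphere"
    unfolding inv_sphere_def using inv_inner_scale[of c z] cc Vn_lin[OF assms(1,1), of c 0] by simp
qed

context
  fixes x0 :: "nat \<Rightarrow> real"
  assumes x0: "x0 \<in> inv_sphere"
    and x0_min: "\<And>y. y \<in> inv_sphere \<Longrightarrow> bform x0 x0 \<le> bform y y"
begin

lemma bform_ge_min_inv_inner: "z \<in> Vn \<Longrightarrow> bform z z \<ge> bform x0 x0 * inv_inner z z"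
proof (cases "z = (\<lambda>k. 0)")
  case True
  then show ?thesis
    by (simp add: bform_def inv_inner_def form_def cox_form_def W_zero)
next
  case False
  assume z: "z \<in> Vn"
  define c where "c = 1 / sqrt (inv_inner z z)"
  have "bform x0 x0 \<le> bform (\<lambda>k. c * z k) (\<lambda>k. c * z k)"
    using x0_min[OF scale_into_inv_sphere(1)[OF z False]] unfolding c_def .
  then have "bform x0 x0 \<le> c * c * bform z z"
    by (simp only: bform_scale)
  from mult_right_mono[OF this inv_inner_nonneg[of z]]
  have "bform x0 x0 * inv_inner z z \<le> c * c * inv_inner z z * bform z z"
    by (simp add: algebra_simps)
  then show ?thesis
    using scale_into_inv_sphere(2)[OF z False] unfolding c_def by simp
qed

text \<open>Lagrange multipliers: the minimizer is an eigenvector of \<open>B\<close> relative to \<open>inv_inner\<close>.\<close>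

lemma bform_min_eigenvector: "y \<in> Vn \<Longrightarrow> bform x0 y = bform x0 x0 * inv_inner x0 y"
proof -
  assume y: "y \<in> Vn"
  have x0V: "x0 \<in> Vn" and x0_unit: "inv_inner x0 x0 = 1"
    using x0 unfolding inv_sphere_def by auto
  have "2 * t * (bform x0 y - bform x0 x0 * inv_inner x0 y)
      + t * t * (bform y y - bform x0 x0 * inv_inner y y) \<ge> 0" for t
  proof -
    have "(\<lambda>k. x0 k + t * y k) \<in> Vn"
      using Vn_lin[OF x0V y, of 1 t] by simp
    from bform_ge_min_inv_inner[OF this] show ?thesis
      unfolding bform_expand inv_inner_expand using x0_unit by (simp add: algebra_simps)
  qed
  then have "bform x0 y - bform x0 x0 * inv_inner x0 y = 0"
    by (rule linear_coeff_zero_if_quadratic_nonneg)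
  then show ?thesis
    by simp
qed

text \<open>If the minimum were \<open>\<le> 0\<close>, reflecting the eigenvector equation by \<open>s\<^sub>i\<close> would give
\<open>B(\<alpha>\<^sub>i, \<alpha>\<^sub>i) = 1 \<le> 0\<close> unless \<open>B(\<alpha>\<^sub>i, x0) = 0\<close>; and \<open>x0\<close> cannot be \<open>B\<close>-orthogonal
to all simple roots.\<close>

lemma bform_min_pos: "bform x0 x0 > 0"
proof (rule ccontr)
  let ?l = "bform x0 x0"
  assume "\<not> ?l > 0"
  then have l: "?l \<le> 0"
    by simp
  have x0V: "x0 \<in> Vn"
    using x0 unfolding inv_sphere_def by auto
  have "form i x0 = 0" if i: "i < n" for i
  proof (rule ccontr)
    assume nz: "form i x0 \<noteq> 0"
    have "bform (sref i x0) y = ?l * inv_inner (sref i x0) y" if y: "y \<in> Vn" for y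
      using bform_sref[OF i] bform_min_eigenvector[OF sref_Vn[OF y i]] inv_inner_sref_right[OF i] by simp
    then have "bform x0 y + (- 2 * form i x0) * bform (simple_root i) y
        = ?l * (inv_inner x0 y + (- 2 * form i x0) * inv_inner (simple_root i) y)" if "y \<in> Vn" for y
      using that unfolding sref_eq_comb[of i x0] bform_lin_left inv_inner_lin_left by simp
    then have "bform (simple_root i) y = ?l * inv_inner (simple_root i) y" if "y \<in> Vn" for y
      using that bform_min_eigenvector nz by (simp add: algebra_simps)
    from this[OF simple_root_Vn[OF i]] have "1 = ?l * inv_inner (simple_root i) (simple_root i)"
      using bform_simple_root_left[OF i] form_simple_root_self[OF i] by simp
    then show False
      using mult_nonpos_nonneg[OF l inv_inner_nonneg[of "simple_root i"]] by simp
  qed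
  then have "x0 = (\<lambda>k. 0)"
    using Vn_orthogonal_simple_roots_eq_0[OF x0V] by blast
  then show False
    using x0 by (simp add: inv_sphere_def inv_inner_def W_zero)
qed

end

theorem bform_pos_def:
  assumes x: "x \<in> Vn" "x \<noteq> (\<lambda>k. 0)"
  shows "bform x x > 0"
proof -
  obtain x0 where x0: "x0 \<in> inv_sphere" and x0_min: "\<And>y. y \<in> inv_sphere \<Longrightarrow> bform x0 x0 \<le> bform y y"
    using continuous_attains_inf[OF compact_inv_sphere _ continuous_on_subset[OF continuous_on_bform]]
      scale_into_inv_sphere(1)[OF x] by blast
  have "bform x x \<ge> bform x0 x0 * inv_inner x x"
    using bform_ge_min_inv_inner[OF x0 x0_min x(1)] .
  moreover have "bform x0 x0 * inv_inner x x > 0"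
    using bform_min_pos[OF x0 x0_min] inv_inner_pos[OF x] by simp
  ultimately show ?thesis
    by simp
qed

end

subsection \<open>Irreducible components\<close>

context coxeter
begin

abbreviation component :: "nat \<Rightarrow> nat set" where
  "component i \<equiv> cox_component M n i"

lemma sym_cox_edges: "sym (cox_edges M n)"
  unfolding cox_edges_def by (rule symI) (auto simp: M_sym)

lemma component_self: "i < n \<Longrightarrow> i \<in> component i"
  unfolding cox_component_def by auto

lemma component_subset: "component i \<subseteq> {..<n}"
  unfolding cox_component_def by auto

lemma component_eq: "j \<in> component i \<Longrightarrow> component j = component i"
proof -
  assume "j \<in> component i"
  then have ij: "(i, j) \<in> (cox_edges M n)\<^sup>*"
    unfolding cox_component_def by auto
  then have ji: "(j, i) \<in> (cox_edges M n)\<^sup>*"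
    using sym_rtrancl[OF sym_cox_edges] unfolding sym_def by blast
  show ?thesis
    unfolding cox_component_def using rtrancl_trans[OF ij] rtrancl_trans[OF ji] by blast
qed

lemma edge_in_component: "i < n \<Longrightarrow> j < n \<Longrightarrow> i \<noteq> j \<Longrightarrow> 3 \<le> M i j \<Longrightarrow> j \<in> component i"
  unfolding cox_component_def cox_edges_def by auto

lemma component_edge_exit:
  assumes "(i, k) \<in> (cox_edges M n)\<^sup>*" "k \<notin> A" "i \<in> A"
  shows "\<exists>a b. a \<in> A \<and> b \<notin> A \<and> (a, b) \<in> cox_edges M n"
  using assms by (induction rule: rtrancl_induct) auto

lemma dihedral_pairs_component:
  assumes "(a, b) \<in> dihedral_pairs M n"
  shows "component a = {a, b}" "component b = {a, b}" "a < b" "b < n"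
  using assms component_eq[of b a] unfolding dihedral_pairs_def by auto

lemma finite_dihedral_pairs: "finite (dihedral_pairs M n)"
  by (rule finite_subset[of _ "{..<n} \<times> {..<n}"]) (auto simp: dihedral_pairs_def)

lemma card_component_2_iff:
  "i < n \<and> card (component i) = 2 \<longleftrightarrow> i \<in> (\<Union>(a, b)\<in>dihedral_pairs M n. {a, b})"
proof
  assume i: "i < n \<and> card (component i) = 2"
  then obtain x y where "component i = {x, y}" "x \<noteq> y"
    unfolding card_2_iff by blast
  moreover have "i \<in> component i"
    using component_self i by simp
  ultimately obtain p where p: "component i = {i, p}" "p \<noteq> i"
    by auto
  then have pn: "p < n"
    using component_subset by auto
  have "p \<in> component i"
    using p by auto
  then have cp: "component p = {p, i}"
    using component_eq p by auto
  show "i \<in> (\<Union>(a, b)\<in>dihedral_pairs M n. {a, b})"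
  proof (cases "i < p")
    case True
    then have "(i, p) \<in> dihedral_pairs M n"
      unfolding dihedral_pairs_def using p pn by simp
    then show ?thesis
      by blast
  next
    case False
    then have "(p, i) \<in> dihedral_pairs M n"
      unfolding dihedral_pairs_def using p cp i by simp
    then show ?thesis
      by blast
  qed
next
  assume "i \<in> (\<Union>(a, b)\<in>dihedral_pairs M n. {a, b})"
  then obtain a b where ab: "(a, b) \<in> dihedral_pairs M n" and i: "i = a \<or> i = b"
    by blast
  note c = dihedral_pairs_component[OF ab]
  have "component i = {a, b}" "i < n"
    using c i by auto
  then show "i < n \<and> card (component i) = 2"
    using c(3) by simp
qed

lemma disjoint_dihedral_pairs:
  assumes "(a, b) \<in> dihedral_pairs M n" "(a', b') \<in> dihedral_pairs M n" "(a, b) \<noteq> (a', b')"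
  shows "{a, b} \<inter> {a', b'} = {}"
proof (rule ccontr)
  assume "{a, b} \<inter> {a', b'} \<noteq> {}"
  then obtain c where c: "c \<in> {a, b}" "c \<in> {a', b'}"
    by blast
  have "component c = {a, b}" "component c = {a', b'}" "a < b" "a' < b'"
    using c dihedral_pairs_component[OF assms(1)] dihedral_pairs_component[OF assms(2)] by auto
  then have "a = a' \<and> b = b'"
    using doubleton_eq_iff[of a b a' b'] by auto
  then show False
    using assms(3) by simp
qed

end

context finite_coxeter
begin

definition neg_cov :: "nat \<Rightarrow> nat \<Rightarrow> real" where
  "neg_cov i j = 1 / 4 - 1 / (2 * real (M i j))"

definition row_var :: "nat \<Rightarrow> real" where
  "row_var i = 1 / 4 - (\<Sum>j\<in>{..<n}-{i}. neg_cov i j)"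

definition nondihedral :: "nat set" where
  "nondihedral = {i. i < n \<and> card (component i) \<noteq> 2}"

definition nondihedral_cov :: real where
  "nondihedral_cov = (\<Sum>i\<in>nondihedral. \<Sum>j\<in>nondihedral-{i}. neg_cov i j)"

lemma neg_cov_nonneg: "i < n \<Longrightarrow> j < n \<Longrightarrow> i \<noteq> j \<Longrightarrow> neg_cov i j \<ge> 0"
  using M_ge2[of i j] by (simp add: neg_cov_def field_simps)

lemma neg_cov_eq_0: "i < n \<Longrightarrow> j < n \<Longrightarrow> i \<noteq> j \<Longrightarrow> \<not> 3 \<le> M i j \<Longrightarrow> neg_cov i j = 0"
  using M_ge2[of i j] by (simp add: neg_cov_def)

lemma nondihedral_subset: "nondihedral \<subseteq> {..<n}"
  unfolding nondihedral_def by auto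

lemma neg_cov_eq_0_other_component:
  "i < n \<Longrightarrow> j < n \<Longrightarrow> i \<noteq> j \<Longrightarrow> j \<notin> component i \<Longrightarrow> neg_cov i j = 0"
  using neg_cov_eq_0 edge_in_component by blast

lemma row_var_nondihedral:
  assumes i: "i \<in> nondihedral"
  shows "row_var i = 1 / 4 - (\<Sum>j\<in>nondihedral-{i}. neg_cov i j)"
proof -
  have "(\<Sum>j\<in>{..<n}-{i}. neg_cov i j) = (\<Sum>j\<in>nondihedral-{i}. neg_cov i j)"
  proof (rule sum.mono_neutral_right)
    show "\<forall>j\<in>{..<n} - {i} - (nondihedral - {i}). neg_cov i j = 0"
    proof
      fix j
      assume j: "j \<in> {..<n} - {i} - (nondihedral - {i})"
      have "j \<notin> component i"
        using j i component_eq[of j i] unfolding nondihedral_def by auto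
      then show "neg_cov i j = 0"
        using j i neg_cov_eq_0_other_component unfolding nondihedral_def by auto
    qed
  qed (use nondihedral_subset in auto)
  then show ?thesis
    unfolding row_var_def by simp
qed

lemma row_var_dihedral:
  assumes "(a, b) \<in> dihedral_pairs M n" "i \<in> {a, b}"
  shows "row_var i = 1 / (2 * real (M a b))"
proof -
  have ab: "component a = {a, b}" "component b = {a, b}" "a < b" "b < n"
    using dihedral_pairs_component[OF assms(1)] by auto
  obtain p where p: "{i, p} = {a, b}" "p \<noteq> i"
    using assms(2) ab(3) by auto
  have "(\<Sum>j\<in>{..<n}-{i}. neg_cov i j) = (\<Sum>j\<in>{p}. neg_cov i j)"
  proof (rule sum.mono_neutral_right)
    show "\<forall>j\<in>{..<n} - {i} - {p}. neg_cov i j = 0"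
      using neg_cov_eq_0_other_component ab p assms(2) by auto
  qed (use ab p in auto)
  moreover have "M i p = M a b"
    using p ab M_sym by (auto simp: doubleton_eq_iff)
  ultimately show ?thesis
    unfolding row_var_def neg_cov_def by simp
qed

lemma sum_row_var_dihedral:
  "(\<Sum>i | i < n \<and> card (component i) = 2. row_var i) = dihedral_sum M n"
proof -
  have "{i. i < n \<and> card (component i) = 2} = (\<Union>(a, b)\<in>dihedral_pairs M n. {a, b})"
    using card_component_2_iff by blast
  then have "(\<Sum>i | i < n \<and> card (component i) = 2. row_var i)
      = (\<Sum>i\<in>(\<Union>(a, b)\<in>dihedral_pairs M n. {a, b}). row_var i)"
    by (simp only:)
  also have "\<dots> = (\<Sum>(a, b)\<in>dihedral_pairs M n. \<Sum>i\<in>{a, b}. row_var i)"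
  proof -
    have "(case x of (a, b) \<Rightarrow> {a, b}) \<inter> (case y of (a, b) \<Rightarrow> {a, b}) = {}"
      if "x \<in> dihedral_pairs M n" "y \<in> dihedral_pairs M n" "x \<noteq> y" for x y
    proof -
      obtain a b a' b' where "x = (a, b)" "y = (a', b')"
        by fastforce
      then show ?thesis
        using that disjoint_dihedral_pairs[of a b a' b'] by simp
    qed
    then show ?thesis
      by (subst sum.UNION_disjoint[OF finite_dihedral_pairs]) (auto simp: split_beta)
  qed
  also have "\<dots> = (\<Sum>(a, b)\<in>dihedral_pairs M n. 1 / real (M a b))"
  proof (rule sum.cong[OF refl], clarify)
    fix a b
    assume ab: "(a, b) \<in> dihedral_pairs M n"
    then have "a \<noteq> b"
      using dihedral_pairs_component(3) by blast
    then show "(\<Sum>i\<in>{a, b}. row_var i) = 1 / real (M a b)"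
      using row_var_dihedral[OF ab] by simp
  qed
  finally show ?thesis
    unfolding dihedral_sum_def .
qed

lemma des_variance_split:
  "des_variance M n = real (nondihedral_rank M n) / 4 - nondihedral_cov + dihedral_sum M n"
proof -
  have "des_variance M n = (\<Sum>i<n. row_var i)"
    unfolding des_variance_eq row_var_def neg_cov_def ..
  also have "\<dots> = (\<Sum>i\<in>nondihedral. row_var i) + (\<Sum>i | i < n \<and> card (component i) = 2. row_var i)"
    unfolding nondihedral_def by (subst sum.union_disjoint[symmetric]) (auto intro: sum.cong)
  also have "(\<Sum>i\<in>nondihedral. row_var i) = real (nondihedral_rank M n) / 4 - nondihedral_cov"
    using row_var_nondihedral
    by (simp add: nondihedral_cov_def sum_subtractf nondihedral_rank_def nondihedral_def)
  finally show ?thesis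
    using sum_row_var_dihedral by simp
qed

lemma nondihedral_cov_nonneg: "nondihedral_cov \<ge> 0"
  unfolding nondihedral_cov_def nondihedral_def by (intro sum_nonneg neg_cov_nonneg) auto

end

subsection \<open>Bounds on the variance\<close>

lemma cos_pi_div_ge_half: "3 \<le> m \<Longrightarrow> cos (pi / real m) \<ge> 1 / 2"
  using cos_pi_div_mono[of 3 m] by (simp add: cos_60)

lemma cos_pi_div_ge_sqrt2: "4 \<le> m \<Longrightarrow> cos (pi / real m) \<ge> sqrt 2 / 2"
  using cos_pi_div_mono[of 4 m] by (simp add: cos_45)

lemma cos_pi_div_ge_sqrt3: "6 \<le> m \<Longrightarrow> cos (pi / real m) \<ge> sqrt 3 / 2"
  using cos_pi_div_mono[of 6 m] by (simp add: cos_30)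

context finite_coxeter
begin

lemma bform_three_simple_roots:
  assumes ijk: "i < n" "j < n" "k < n" "i \<noteq> j" "i \<noteq> k" "j \<noteq> k"
  shows "bform (\<lambda>t. a * simple_root i t + (b * simple_root j t + c * simple_root k t))
            (\<lambda>t. a * simple_root i t + (b * simple_root j t + c * simple_root k t))
       = a * a + b * b + c * c - 2 * a * b * cos (pi / real (M i j))
         - 2 * a * c * cos (pi / real (M i k)) - 2 * b * c * cos (pi / real (M j k))"
proof -
  define y where "y = (\<lambda>t. b * simple_root j t + c * simple_root k t)"
  define x where "x = (\<lambda>t. a * simple_root i t + (b * simple_root j t + c * simple_root k t))"
  have x_eq: "x = (\<lambda>t. a * simple_root i t + 1 * y t)"
    unfolding x_def y_def by simp
  have bx: "bform x z = a * form i z + b * form j z + c * form k z" for z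
    unfolding x_eq bform_lin_left y_def using bform_simple_root_left ijk by simp
  have fx: "form q x = a * form q (simple_root i) + b * form q (simple_root j) + c * form q (simple_root k)"
    for q
    unfolding x_eq form_lin y_def by simp
  have "M j i = M i j" "M k i = M i k" "M k j = M j k"
    using M_sym ijk by auto
  then show ?thesis
    unfolding x_def[symmetric] bx fx
    using ijk by (simp add: form_simple_root form_simple_root_self M_diag algebra_simps)
qed

text \<open>Positive definiteness excludes \<open>m\<^sub>i\<^sub>j \<ge> 6\<close> when \<open>i\<close> has a further neighbour \<open>k\<close>:
the form vanishes or is negative at \<open>2\<alpha>\<^sub>i + \<surd>3 \<alpha>\<^sub>j + \<alpha>\<^sub>k\<close>.\<close>

lemma no_large_label_with_neighbour:
  assumes ijk: "i < n" "j < n" "k < n" "i \<noteq> j" "i \<noteq> k" "j \<noteq> k"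
    and m: "6 \<le> M i j" "3 \<le> M i k"
  shows False
proof -
  define x where "x = (\<lambda>t. 2 * simple_root i t + (sqrt 3 * simple_root j t + 1 * simple_root k t))"
  have "x \<in> Vn"
    unfolding x_def Vn_def simple_root_def using ijk by auto
  moreover have "x i = 2"
    unfolding x_def simple_root_def using ijk by auto
  ultimately have pos: "bform x x > 0"
    using bform_pos_def by fastforce
  have s3: "sqrt 3 * sqrt 3 = (3::real)"
    by simp
  have "4 * sqrt 3 * cos (pi / real (M i j)) \<ge> 4 * sqrt 3 * (sqrt 3 / 2)"
    using cos_pi_div_ge_sqrt3[OF m(1)] by (intro mult_left_mono) auto
  moreover have "2 * sqrt 3 * cos (pi / real (M j k)) \<ge> 0"
    using cos_pi_div_nonneg M_ge2 ijk by simp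
  moreover have "bform x x = 8 - 4 * sqrt 3 * cos (pi / real (M i j)) - 4 * cos (pi / real (M i k))
      - 2 * sqrt 3 * cos (pi / real (M j k))"
    unfolding x_def bform_three_simple_roots[OF ijk] using s3 by (simp add: algebra_simps)
  ultimately have "bform x x \<le> 0"
    using cos_pi_div_ge_half[OF m(2)] s3 by linarith
  then show False
    using pos by simp
qed

lemma nondihedral_edge_label_le_5:
  assumes i: "i \<in> nondihedral" and j: "j \<in> nondihedral" and ij: "i \<noteq> j" and m3: "3 \<le> M i j"
  shows "M i j \<le> 5"
proof (rule ccontr)
  assume "\<not> M i j \<le> 5"
  then have m6: "6 \<le> M i j"
    by simp
  have ij_n: "i < n" "j < n"
    using i j unfolding nondihedral_def by auto
  have "j \<in> component i" "i \<in> component i"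
    using edge_in_component component_self ij_n ij m3 by auto
  moreover have "component i \<noteq> {i, j}"
    using i ij unfolding nondihedral_def by auto
  ultimately obtain k where k: "k \<in> component i" "k \<notin> {i, j}"
    by blast
  then obtain a b where ab: "a \<in> {i, j}" "b \<notin> {i, j}" "(a, b) \<in> cox_edges M n"
    using component_edge_exit[of i k "{i, j}"] unfolding cox_component_def by auto
  then have b: "b < n" "a \<noteq> b" "3 \<le> M a b"
    unfolding cox_edges_def by auto
  show False
  proof (cases "a = i")
    case True
    then show False
      using no_large_label_with_neighbour[of i j b] ij_n b ab ij m6 by auto
  next
    case False
    then have "a = j"
      using ab by auto
    then show False
      using no_large_label_with_neighbour[of j i b] ij_n b ab ij m6 M_sym[OF ij_n] by auto
  qed
qed

lemma neg_cov_le_cos: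
  assumes i: "i \<in> nondihedral" and j: "j \<in> nondihedral" and ij: "i \<noteq> j"
  shows "neg_cov i j \<le> 6 / 25 * cos (pi / real (M i j))"
proof -
  have "2 \<le> M i j"
    using M_ge2 i j ij unfolding nondihedral_def by auto
  then consider "M i j = 2" | "M i j = 3" | "4 \<le> M i j" "M i j \<le> 5"
    using nondihedral_edge_label_le_5[OF i j ij] by linarith
  then show ?thesis
  proof cases
    case 3
    have "sqrt 2 \<ge> (5 / 4 :: real)"
      by (rule real_le_rsqrt) (simp add: power2_eq_square)
    moreover have "1 / (2 * real (M i j)) \<ge> 1 / 10"
      using 3 by (simp add: field_simps)
    ultimately show ?thesis
      using cos_pi_div_ge_sqrt2[OF 3(1)] unfolding neg_cov_def by linarith
  qed (simp_all add: neg_cov_def cos_60)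
qed

text \<open>This is \<open>B(x, x) \<ge> 0\<close> for \<open>x\<close> the indicator vector of the non-dihedral generators.\<close>

lemma sum_cos_nondihedral_le:
  "(\<Sum>i\<in>nondihedral. \<Sum>j\<in>nondihedral-{i}. cos (pi / real (M i j))) \<le> real (card nondihedral)"
proof -
  define x where "x = (\<lambda>k. if k \<in> nondihedral then 1 else (0::real))"
  have "x \<in> Vn"
    unfolding x_def Vn_def nondihedral_def by auto
  then have nonneg: "bform x x \<ge> 0"
    using bform_pos_def[of x] by (cases "x = (\<lambda>k. 0)") (auto simp: bform_def)
  have form_x: "form k x = 1 - (\<Sum>j\<in>nondihedral-{k}. cos (pi / real (M k j)))"
    if k: "k \<in> nondihedral" for k
  proof -
    have "form k x = (\<Sum>j\<in>nondihedral. - cos (pi / real (M k j)))"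
      unfolding form_def cox_form_def x_def
      by (rule sum.mono_neutral_cong_right) (use nondihedral_subset in auto)
    also have "\<dots> = - cos (pi / real (M k k)) + (\<Sum>j\<in>nondihedral-{k}. - cos (pi / real (M k j)))"
      using k nondihedral_subset by (subst sum.remove[of _ k]) (auto intro: finite_subset)
    finally show ?thesis
      using M_diag k nondihedral_subset by (auto simp: sum_negf)
  qed
  have "bform x x = (\<Sum>k\<in>nondihedral. form k x)"
    unfolding bform_def x_def by (rule sum.mono_neutral_cong_right) (use nondihedral_subset in auto)
  also have "\<dots> = real (card nondihedral) - (\<Sum>i\<in>nondihedral. \<Sum>j\<in>nondihedral-{i}. cos (pi / real (M i j)))"
    using form_x by (simp add: sum_subtractf)
  finally show ?thesis
    using nonneg by simp
qed

lemma nondihedral_cov_le: "nondihedral_cov \<le> 6 / 25 * real (card nondihedral)"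
proof -
  have "nondihedral_cov \<le> (\<Sum>i\<in>nondihedral. \<Sum>j\<in>nondihedral-{i}. 6 / 25 * cos (pi / real (M i j)))"
    unfolding nondihedral_cov_def by (intro sum_mono neg_cov_le_cos) auto
  also have "\<dots> = 6 / 25 * (\<Sum>i\<in>nondihedral. \<Sum>j\<in>nondihedral-{i}. cos (pi / real (M i j)))"
    by (simp add: sum_distrib_left)
  also have "\<dots> \<le> 6 / 25 * real (card nondihedral)"
    using sum_cos_nondihedral_le by simp
  finally show ?thesis .
qed

theorem des_variance_bounds:
  "real (nondihedral_rank M n) / 100 + dihedral_sum M n \<le> des_variance M n"
  "des_variance M n \<le> real (nondihedral_rank M n) / 4 + dihedral_sum M n"
  using des_variance_split nondihedral_cov_le nondihedral_cov_nonneg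
  by (simp_all add: nondihedral_rank_def nondihedral_def)

end

lemma sqrt_at_top_of_lower_bound:
  fixes V D :: "'a \<Rightarrow> real" and R :: "'a \<Rightarrow> nat"
  assumes c: "c > 0" and lower: "eventually (\<lambda>x. c * real (R x) + D x \<le> V x) F"
    and D_nonneg: "\<And>x. D x \<ge> 0"
    and lim: "filterlim R at_top F \<or> filterlim D at_top F"
  shows "filterlim (\<lambda>x. sqrt (V x)) at_top F"
proof -
  have "filterlim V at_top F"
    using lim
  proof
    assume "filterlim R at_top F"
    then have "filterlim (\<lambda>x. c * real (R x)) at_top F"
      using filterlim_tendsto_pos_mult_at_top[OF tendsto_const c]
        filterlim_compose[OF filterlim_real_sequentially] by blast
    moreover have "eventually (\<lambda>x. c * real (R x) \<le> V x) F"
      using lower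
    proof eventually_elim
      case (elim x)
      then show ?case
        using D_nonneg[of x] by linarith
    qed
    ultimately show ?thesis
      by (rule filterlim_at_top_mono)
  next
    assume "filterlim D at_top F"
    moreover have "eventually (\<lambda>x. D x \<le> V x) F"
      using lower
    proof eventually_elim
      case (elim x)
      then show ?case
        using mult_nonneg_nonneg[of c "real (R x)"] c by linarith
    qed
    ultimately show ?thesis
      by (rule filterlim_at_top_mono)
  qed
  then show ?thesis
    by (rule filterlim_compose[OF sqrt_at_top])
qed

lemma at_top_of_sqrt_at_top_upper_bound:
  fixes V D :: "'a \<Rightarrow> real"
  assumes lim: "filterlim (\<lambda>x. sqrt (V x)) at_top F"
    and upper: "eventually (\<lambda>x. V x \<le> c + D x) F"
  shows "filterlim D at_top F"
proof -
  have "filterlim (\<lambda>x. (sqrt (V x))\<^sup>2) at_top F"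
    using filterlim_pow_at_top[OF _ lim] by simp
  moreover have "eventually (\<lambda>x. 0 < sqrt (V x)) F"
    using lim unfolding filterlim_at_top_dense by blast
  then have "eventually (\<lambda>x. (sqrt (V x))\<^sup>2 \<le> V x) F"
    by (rule eventually_mono) simp
  ultimately have "filterlim V at_top F"
    by (rule filterlim_at_top_mono)
  then have "filterlim (\<lambda>x. - c + V x) at_top F"
    by (rule filterlim_tendsto_add_at_top[OF tendsto_const])
  then show ?thesis
    by (rule filterlim_at_top_mono) (use upper in \<open>auto elim: eventually_mono\<close>)
qed

theorem proposition6p4:
  fixes M :: "nat \<Rightarrow> nat \<Rightarrow> nat \<Rightarrow> nat"
  assumes cox: "\<And>n. n \<ge> 1 \<Longrightarrow> coxeter_matrix (M n) n"
    and fin: "\<And>n. n \<ge> 1 \<Longrightarrow> finite (cox_group (M n) n)"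
  shows "((filterlim (\<lambda>n. nondihedral_rank (M n) n) at_top sequentially
           \<or> filterlim (\<lambda>n. dihedral_sum (M n) n) at_top sequentially)
          \<longrightarrow> filterlim (\<lambda>n. sqrt (des_variance (M n) n)) at_top sequentially)
       \<and> (filterlim (\<lambda>n. sqrt (des_variance (M n) n)) at_top sequentially
          \<longrightarrow> ((\<nexists>B. \<forall>n\<ge>1. nondihedral_rank (M n) n \<le> B)
               \<or> filterlim (\<lambda>n. dihedral_sum (M n) n) at_top sequentially))"
proof -
  have fc: "finite_coxeter (M n) n" if "n \<ge> 1" for n
    using cox[OF that] fin[OF that]
    by (simp add: finite_coxeter_def finite_coxeter_axioms_def coxeter_def coxeter.cox_group_eq)
  have bounds: "eventually (\<lambda>n. real (nondihedral_rank (M n) n) / 100 + dihedral_sum (M n) n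
        \<le> des_variance (M n) n \<and> des_variance (M n) n
        \<le> real (nondihedral_rank (M n) n) / 4 + dihedral_sum (M n) n) sequentially"
    using eventually_ge_at_top[of 1] by (rule eventually_mono) (simp add: finite_coxeter.des_variance_bounds[OF fc])
  have D_nonneg: "dihedral_sum (M n) n \<ge> 0" for n
    unfolding dihedral_sum_def by (intro sum_nonneg) auto
  have lower: "eventually (\<lambda>n. 1 / 100 * real (nondihedral_rank (M n) n) + dihedral_sum (M n) n
      \<le> des_variance (M n) n) sequentially"
    using bounds by (rule eventually_mono) simp
  have D_lim: "filterlim (\<lambda>n. dihedral_sum (M n) n) at_top sequentially"
    if lim: "filterlim (\<lambda>n. sqrt (des_variance (M n) n)) at_top sequentially"
      and B: "\<forall>n\<ge>1. nondihedral_rank (M n) n \<le> B" for B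
  proof (rule at_top_of_sqrt_at_top_upper_bound[OF lim])
    show "eventually (\<lambda>n. des_variance (M n) n \<le> real B / 4 + dihedral_sum (M n) n) sequentially"
      using bounds eventually_ge_at_top[of 1]
    proof eventually_elim
      case (elim n)
      then show ?case
        using B by force
    qed
  qed
  show ?thesis
    using sqrt_at_top_of_lower_bound[OF _ lower D_nonneg] D_lim by auto
qed

end
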